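(* If $\theta\in l_{2}$ and $\tau\in l_{2}$ (with $\tau_i\ge 0$), then $Q_{\mathrm{G}_{\tau}}(\cdot|X=x)$ and $Q_{\theta}$ are mutually absolutely continuous for $P_{\theta}$-almost every $x$, and the Kullback--Leibler risk of $Q_{\mathrm{G}_{\tau}}$ is \[ R(\theta,Q_{\mathrm{G}_{\tau}}) = \sum_{i=1}^{\infty}\left\{\frac{1}{2}\log\left(\frac{1+\tau^{2}_{i}/v^{2}_{\varepsilon,\tilde{\varepsilon}}}{1+\tau^{2}_{i}/v^{2}_{\varepsilon}}\right) +\frac{1}{2}\frac{v^{2}_{\varepsilon,\tilde{\varepsilon}}+\theta^{2}_{i}}{v^{2}_{\varepsilon,\tilde{\varepsilon}}+\tau^{2}_{i}} -\frac{1}{2}\frac{v^{2}_{\varepsilon}+\theta^{2}_{i}}{v^{2}_{\varepsilon}+\tau^{2}_{i}} \right\}. \]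
   Context: Fix $\varepsilon>0,\tilde\varepsilon>0$. For $\theta\in l_2$, $P_{\theta}=\bigotimes_{i\ge1}\mathcal{N}(\theta_{i},\varepsilon^{2})$ (law of the observation $X$) and $Q_{\theta}=\bigotimes_{i\ge1}\mathcal{N}(\theta_{i},\tilde{\varepsilon}^{2})$ (law of the future observation $Y$) on $\mathbb{R}^\infty$ with the product Borel $\sigma$-field. For a predictive distribution $x\mapsto\widehat Q(\cdot;x)$, the risk is $R(\theta,\widehat Q)=\int l(\theta,\widehat Q(\cdot;x))\,\mathrm dP_\theta(x)$ where $l(\theta,Q)=\int\log\frac{\mathrm dQ_\theta}{\mathrm dQ}\,\mathrm dQ_\theta$ if $Q_\theta\ll Q$ and $\infty$ otherwise. For $\tau$ with $\tau_i\ge0$, $\mathrm{G}_\tau=\bigotimes_i\mathcal N(0,\tau_i^2)$ and the Bayesian predictive distribution based on it is $Q_{\mathrm{G}_{\tau}}(\cdot|X=x)=\bigotimes_{i}\mathcal{N}\Big(\frac{1/\varepsilon^{2}}{1/\varepsilon^{2}+1/\tau^{2}_{i}}x_{i},\ \frac{1}{1/\varepsilon^{2}+1/\tau^{2}_{i}}+\tilde{\varepsilon}^{2}\Big)$ (coordinates with $\tau_i=0$ give $\mathcal N(0,\tilde\varepsilon^2)$). Also $v^{2}_{\varepsilon,\tilde{\varepsilon}}=1/(1/\varepsilon^{2}+1/\tilde{\varepsilon}^{2})$ and $v^{2}_{\varepsilon}=\varepsilon^{2}$. *)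

theory Defs
  imports "HOL-Probability.Probability"
begin

definition gauss :: "real \<Rightarrow> real \<Rightarrow> real measure" where
  "gauss m s2 = density lborel (normal_density m (sqrt s2))"

definition gauss_prod :: "(nat \<Rightarrow> real) \<Rightarrow> real \<Rightarrow> (nat \<Rightarrow> real) measure" where
  "gauss_prod \<theta> s = PiM UNIV (\<lambda>i. gauss (\<theta> i) (s\<^sup>2))"

definition in_l2 :: "(nat \<Rightarrow> real) \<Rightarrow> bool" where
  "in_l2 \<theta> \<longleftrightarrow> summable (\<lambda>i. (\<theta> i)\<^sup>2)"

text \<open>Loss l(theta,Q) = int log (dQ_theta/dQ) dQ_theta if Q_theta << Q (and the
  integral is finite), infinity otherwise.  Here Qt is Q_theta.\<close>
definition KL_loss :: "'a measure \<Rightarrow> 'a measure \<Rightarrow> ennreal" where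
  "KL_loss Qt Q =
     (if absolutely_continuous Q Qt \<and> integrable Qt (entropy_density (exp 1) Q Qt)
      then ennreal (KL_divergence (exp 1) Q Qt) else \<infinity>)"

definition risk :: "(nat \<Rightarrow> real) measure \<Rightarrow> (nat \<Rightarrow> real) measure
     \<Rightarrow> ((nat \<Rightarrow> real) \<Rightarrow> (nat \<Rightarrow> real) measure) \<Rightarrow> ennreal" where
  "risk P Qt Qhat = (\<integral>\<^sup>+ x. KL_loss Qt (Qhat x) \<partial>P)"

definition bayes_pred :: "real \<Rightarrow> real \<Rightarrow> (nat \<Rightarrow> real) \<Rightarrow> (nat \<Rightarrow> real) \<Rightarrow> (nat \<Rightarrow> real) measure" where
  "bayes_pred \<epsilon> \<epsilon>' \<tau> x = PiM UNIV (\<lambda>i.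
     if \<tau> i = 0 then gauss 0 (\<epsilon>'\<^sup>2)
     else gauss ((1 / \<epsilon>\<^sup>2) / (1 / \<epsilon>\<^sup>2 + 1 / (\<tau> i)\<^sup>2) * x i)
                (1 / (1 / \<epsilon>\<^sup>2 + 1 / (\<tau> i)\<^sup>2) + \<epsilon>'\<^sup>2))"

end

theory Submission
  imports Defs
begin

(*
  Under P_theta the predictive distribution Q_G_tau(.|x) is the product of the Gaussians
  N(a_i x_i, eps'^2 + a_i eps^2) with shrinkage a_i = tau_i^2 / (eps^2 + tau_i^2), while Q_theta is
  the product of the N(theta_i, eps'^2).  Two products P = PiM M_i and Q = PiM N_i with
  N_i = exp (- L_i) M_i are mutually absolutely continuous, with KL(P, Q) = sum_i E L_i, as soon as
  the means and variances of the log-likelihood ratios L_i are summable: grouping the L_i into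
  blocks whose variances decay like 4^-k makes sum_k E|block k| finite, so S = sum_i L_i converges
  almost surely and in L^1.  Fatou's lemma, applied to the products in which only finitely many
  factors are changed, gives exp (- S) P <= Q on cylinder sets, and equality follows from
  int exp (- S) dP >= 1, a tail estimate.  For the Gaussian factors these conditions hold whenever
  sum_i (theta_i - a_i x_i)^2 < oo, which is P_theta-almost surely the case because theta and tau
  are in l_2; integrating the coordinatewise Gaussian KL divergences in x gives the series.
*)

section \<open>Integrals on infinite products of probability spaces\<close>

lemma (in product_prob_space) nn_integral_PiM_restrict:
  assumes "finite J" "J \<subseteq> I" "h \<in> borel_measurable (PiM J M)"
  shows "(\<integral>\<^sup>+\<omega>. h (restrict \<omega> J) \<partial>PiM I M) = integral\<^sup>N (PiM J M) h"
proof -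
  have "(\<integral>\<^sup>+\<omega>. h (restrict \<omega> J) \<partial>PiM I M) = (\<integral>\<^sup>+y. h y \<partial>distr (PiM I M) (PiM J M) (\<lambda>\<omega>. restrict \<omega> J))"
    using assms by (intro nn_integral_distr[symmetric] measurable_restrict_subset) auto
  then show ?thesis
    using distr_PiM_restrict_finite[OF assms(1,2)] by simp
qed

lemma (in product_prob_space)
  fixes h :: "_ \<Rightarrow> real"
  assumes "finite J" "J \<subseteq> I" "h \<in> borel_measurable (PiM J M)"
  shows integrable_PiM_restrict_iff:
      "integrable (PiM I M) (\<lambda>\<omega>. h (restrict \<omega> J)) \<longleftrightarrow> integrable (PiM J M) h"
    and integral_PiM_restrict: "(\<integral>\<omega>. h (restrict \<omega> J) \<partial>PiM I M) = integral\<^sup>L (PiM J M) h"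
proof -
  have restrict: "(\<lambda>\<omega>. restrict \<omega> J) \<in> measurable (PiM I M) (PiM J M)"
    using assms by (intro measurable_restrict_subset) auto
  show "integrable (PiM I M) (\<lambda>\<omega>. h (restrict \<omega> J)) \<longleftrightarrow> integrable (PiM J M) h"
    using integrable_distr_eq[OF restrict assms(3)] distr_PiM_restrict_finite[OF assms(1,2)] by simp
  show "(\<integral>\<omega>. h (restrict \<omega> J) \<partial>PiM I M) = integral\<^sup>L (PiM J M) h"
    using integral_distr[OF restrict assms(3)] distr_PiM_restrict_finite[OF assms(1,2)] by simp
qed

lemma (in product_prob_space) nn_integral_PiM_component:
  assumes "i \<in> I" "f \<in> borel_measurable (M i)"
  shows "(\<integral>\<^sup>+\<omega>. f (\<omega> i) \<partial>PiM I M) = integral\<^sup>N (M i) f"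
proof -
  have "(\<integral>\<^sup>+\<omega>. f (\<omega> i) \<partial>PiM I M) = integral\<^sup>N (distr (PiM I M) (M i) (\<lambda>\<omega>. \<omega> i)) f"
    using assms by (intro nn_integral_distr[symmetric] measurable_component_singleton) auto
  then show ?thesis by (simp add: PiM_component[OF assms(1)])
qed

lemma (in product_prob_space)
  fixes f :: "'a \<Rightarrow> real"
  assumes "i \<in> I" "f \<in> borel_measurable (M i)"
  shows integrable_PiM_component_iff: "integrable (PiM I M) (\<lambda>\<omega>. f (\<omega> i)) \<longleftrightarrow> integrable (M i) f"
    and integral_PiM_component: "(\<integral>\<omega>. f (\<omega> i) \<partial>PiM I M) = integral\<^sup>L (M i) f"
proof -
  have component: "(\<lambda>\<omega>. \<omega> i) \<in> measurable (PiM I M) (M i)"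
    using assms(1) by (rule measurable_component_singleton)
  show "integrable (PiM I M) (\<lambda>\<omega>. f (\<omega> i)) \<longleftrightarrow> integrable (M i) f"
    using integrable_distr_eq[OF component assms(2)] by (simp add: PiM_component[OF assms(1)])
  show "(\<integral>\<omega>. f (\<omega> i) \<partial>PiM I M) = integral\<^sup>L (M i) f"
    using integral_distr[OF component assms(2)] by (simp add: PiM_component[OF assms(1)])
qed

lemma (in product_prob_space)
  fixes f :: "'i \<Rightarrow> 'a \<Rightarrow> real"
  assumes J: "finite J" "J \<subseteq> I" and int: "\<And>j. j \<in> J \<Longrightarrow> integrable (M j) (f j)"
  shows integrable_PiM_prod: "integrable (PiM I M) (\<lambda>\<omega>. \<Prod>j\<in>J. f j (\<omega> j))"
    and integral_PiM_prod: "(\<integral>\<omega>. (\<Prod>j\<in>J. f j (\<omega> j)) \<partial>PiM I M) = (\<Prod>j\<in>J. integral\<^sup>L (M j) (f j))"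
proof -
  have [measurable]: "f j \<in> borel_measurable (M j)" if "j \<in> J" for j
    using int[OF that] by auto
  have meas: "(\<lambda>y. \<Prod>j\<in>J. f j (y j)) \<in> borel_measurable (PiM J M)"
    by (intro borel_measurable_prod) (auto intro: measurable_compose[OF measurable_component_singleton])
  have restrict: "(\<lambda>\<omega>. \<Prod>j\<in>J. f j (restrict \<omega> J j)) = (\<lambda>\<omega>. \<Prod>j\<in>J. f j (\<omega> j))"
    by (auto intro!: prod.cong)
  show "integrable (PiM I M) (\<lambda>\<omega>. \<Prod>j\<in>J. f j (\<omega> j))"
    unfolding integrable_PiM_restrict_iff[OF J meas, unfolded restrict]
    using J int by (intro product_integrable_prod) auto
  show "(\<integral>\<omega>. (\<Prod>j\<in>J. f j (\<omega> j)) \<partial>PiM I M) = (\<Prod>j\<in>J. integral\<^sup>L (M j) (f j))"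
    unfolding integral_PiM_restrict[OF J meas, unfolded restrict]
    using J int by (intro product_integral_prod) auto
qed

lemma (in product_prob_space) nn_integral_PiM_prod:
  fixes f :: "'i \<Rightarrow> 'a \<Rightarrow> ennreal"
  assumes J: "finite J" "J \<subseteq> I" and [measurable]: "\<And>j. j \<in> J \<Longrightarrow> f j \<in> borel_measurable (M j)"
  shows "(\<integral>\<^sup>+\<omega>. (\<Prod>j\<in>J. f j (\<omega> j)) \<partial>PiM I M) = (\<Prod>j\<in>J. integral\<^sup>N (M j) (f j))"
proof -
  have meas: "(\<lambda>y. \<Prod>j\<in>J. f j (y j)) \<in> borel_measurable (PiM J M)"
    by (intro borel_measurable_prod_ennreal) (auto intro: measurable_compose[OF measurable_component_singleton])
  have restrict: "(\<lambda>\<omega>. \<Prod>j\<in>J. f j (restrict \<omega> J j)) = (\<lambda>\<omega>. \<Prod>j\<in>J. f j (\<omega> j))"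
    by (auto intro!: prod.cong)
  show ?thesis
    unfolding nn_integral_PiM_restrict[OF J meas, unfolded restrict]
    using J by (intro product_nn_integral_prod) auto
qed

lemma (in product_prob_space) integral_PiM_sum_square:
  fixes f :: "'i \<Rightarrow> 'a \<Rightarrow> real"
  assumes B: "finite B" "B \<subseteq> I"
    and meas: "\<And>i. i \<in> B \<Longrightarrow> f i \<in> borel_measurable (M i)"
    and square: "\<And>i. i \<in> B \<Longrightarrow> integrable (M i) (\<lambda>y. (f i y)\<^sup>2)"
    and centered: "\<And>i. i \<in> B \<Longrightarrow> integral\<^sup>L (M i) (f i) = 0"
  shows "integrable (PiM I M) (\<lambda>\<omega>. (\<Sum>i\<in>B. f i (\<omega> i))\<^sup>2)"
    and "(\<integral>\<omega>. (\<Sum>i\<in>B. f i (\<omega> i))\<^sup>2 \<partial>PiM I M) = (\<Sum>i\<in>B. \<integral>y. (f i y)\<^sup>2 \<partial>M i)"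
proof -
  have int: "integrable (M i) (f i)" if "i \<in> B" for i
    using meas[OF that] square[OF that] by (rule M.square_integrable_imp_integrable)
  have expand: "(\<Sum>i\<in>B. f i (\<omega> i))\<^sup>2 = (\<Sum>i\<in>B. \<Sum>j\<in>B. f i (\<omega> i) * f j (\<omega> j))" for \<omega>
    by (simp add: power2_eq_square sum_product)
  have cross: "integrable (PiM I M) (\<lambda>\<omega>. f i (\<omega> i) * f j (\<omega> j)) \<and>
      (\<integral>\<omega>. f i (\<omega> i) * f j (\<omega> j) \<partial>PiM I M) = (if i = j then \<integral>y. (f i y)\<^sup>2 \<partial>M i else 0)"
    if ij: "i \<in> B" "j \<in> B" for i j
  proof (cases "i = j")
    case True
    have "{i} \<subseteq> I" using B ij by auto
    note diag = integrable_PiM_prod[of "{i}" "\<lambda>l y. (f l y)\<^sup>2"] integral_PiM_prod[of "{i}" "\<lambda>l y. (f l y)\<^sup>2"]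
    show ?thesis
      using diag[OF _ \<open>{i} \<subseteq> I\<close>] square ij True by (simp add: power2_eq_square)
  next
    case False
    have "{i, j} \<subseteq> I" using B ij by auto
    note off_diag = integrable_PiM_prod[of "{i,j}" f] integral_PiM_prod[of "{i,j}" f]
    show ?thesis
      using off_diag[OF _ \<open>{i, j} \<subseteq> I\<close>] ij int centered False by auto
  qed
  show "integrable (PiM I M) (\<lambda>\<omega>. (\<Sum>i\<in>B. f i (\<omega> i))\<^sup>2)"
    unfolding expand using cross by simp
  have "(\<integral>\<omega>. (\<Sum>i\<in>B. f i (\<omega> i))\<^sup>2 \<partial>PiM I M) = (\<Sum>i\<in>B. \<Sum>j\<in>B. \<integral>\<omega>. f i (\<omega> i) * f j (\<omega> j) \<partial>PiM I M)"
    unfolding expand using cross by (simp add: integral_sum integrable_sum del: integral_mult_right_zero integral_mult_left_zero)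
  also have "\<dots> = (\<Sum>i\<in>B. \<Sum>j\<in>B. if i = j then \<integral>y. (f i y)\<^sup>2 \<partial>M i else 0)"
    using cross by (intro sum.cong) auto
  also have "\<dots> = (\<Sum>i\<in>B. \<integral>y. (f i y)\<^sup>2 \<partial>M i)"
    using B by simp
  finally show "(\<integral>\<omega>. (\<Sum>i\<in>B. f i (\<omega> i))\<^sup>2 \<partial>PiM I M) = (\<Sum>i\<in>B. \<integral>y. (f i y)\<^sup>2 \<partial>M i)" .
qed

lemma abs_le_quadratic:
  fixes a y :: real
  assumes "0 < a"
  shows "\<bar>y\<bar> \<le> (a * y\<^sup>2 + 1 / a) / 2"
proof -
  have "2 * a * \<bar>y\<bar> \<le> a\<^sup>2 * y\<^sup>2 + 1"
    using sum_squares_bound[of "a * \<bar>y\<bar>" 1] by (simp add: power2_eq_square algebra_simps)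
  then show ?thesis using assms by (simp add: field_simps power2_eq_square)
qed

lemma (in product_prob_space) integral_abs_sum_le:
  fixes f :: "'i \<Rightarrow> 'a \<Rightarrow> real"
  assumes B: "finite B" "B \<subseteq> I"
    and meas: "\<And>i. i \<in> B \<Longrightarrow> f i \<in> borel_measurable (M i)"
    and square: "\<And>i. i \<in> B \<Longrightarrow> integrable (M i) (\<lambda>y. (f i y)\<^sup>2)"
    and "0 < a"
  shows "(\<integral>\<omega>. \<bar>\<Sum>i\<in>B. f i (\<omega> i)\<bar> \<partial>PiM I M)
      \<le> (a * (\<Sum>i\<in>B. \<integral>y. (f i y - integral\<^sup>L (M i) (f i))\<^sup>2 \<partial>M i) + 1 / a) / 2
        + \<bar>\<Sum>i\<in>B. integral\<^sup>L (M i) (f i)\<bar>"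
proof -
  define c where "c = (\<Sum>i\<in>B. integral\<^sup>L (M i) (f i))"
  define Y where "Y \<omega> = (\<Sum>i\<in>B. f i (\<omega> i) - integral\<^sup>L (M i) (f i))" for \<omega>
  have int: "integrable (M i) (f i)" if "i \<in> B" for i
    using meas[OF that] square[OF that] by (rule M.square_integrable_imp_integrable)
  have centered_square: "integrable (M i) (\<lambda>y. (f i y - integral\<^sup>L (M i) (f i))\<^sup>2)" if "i \<in> B" for i
    using int[OF that] square[OF that] by (simp add: power2_diff)
  have centered: "integral\<^sup>L (M i) (\<lambda>y. f i y - integral\<^sup>L (M i) (f i)) = 0" if "i \<in> B" for i
    using int[OF that] by (simp add: M.prob_space)
  note Y_square = integral_PiM_sum_square[OF B, of "\<lambda>i y. f i y - integral\<^sup>L (M i) (f i)"]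
  have sum_eq: "(\<Sum>i\<in>B. f i (\<omega> i)) = Y \<omega> + c" for \<omega>
    by (simp add: Y_def c_def sum_subtractf)
  have int_sum: "integrable (PiM I M) (\<lambda>\<omega>. \<Sum>i\<in>B. f i (\<omega> i))"
  proof (rule Bochner_Integration.integrable_sum)
    fix i assume "i \<in> B"
    then show "integrable (PiM I M) (\<lambda>\<omega>. f i (\<omega> i))"
      using int meas B by (subst integrable_PiM_component_iff) auto
  qed
  have "(\<integral>\<omega>. \<bar>\<Sum>i\<in>B. f i (\<omega> i)\<bar> \<partial>PiM I M) \<le> (\<integral>\<omega>. (a * (Y \<omega>)\<^sup>2 + 1 / a) / 2 + \<bar>c\<bar> \<partial>PiM I M)"
  proof (rule integral_mono)
    show "integrable (PiM I M) (\<lambda>\<omega>. (a * (Y \<omega>)\<^sup>2 + 1 / a) / 2 + \<bar>c\<bar>)"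
      using Y_square meas centered_square centered by (simp add: Y_def)
    show "\<bar>\<Sum>i\<in>B. f i (\<omega> i)\<bar> \<le> (a * (Y \<omega>)\<^sup>2 + 1 / a) / 2 + \<bar>c\<bar>" for \<omega>
      using abs_le_quadratic[OF \<open>0 < a\<close>, of "Y \<omega>"] abs_triangle_ineq[of "Y \<omega>" c]
      unfolding sum_eq by linarith
  qed (use int_sum in simp)
  also have "\<dots> = (a * (\<Sum>i\<in>B. \<integral>y. (f i y - integral\<^sup>L (M i) (f i))\<^sup>2 \<partial>M i) + 1 / a) / 2 + \<bar>c\<bar>"
    using Y_square meas centered_square centered by (simp add: Y_def P.prob_space)
  finally show ?thesis by (simp add: c_def)
qed

lemma (in product_prob_space) PiM_density_finite:
  fixes g :: "'i \<Rightarrow> 'a \<Rightarrow> ennreal"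
  assumes F: "finite F" "F \<subseteq> I"
    and [measurable]: "\<And>i. i \<in> F \<Longrightarrow> g i \<in> borel_measurable (M i)"
    and prob_g: "\<And>i. i \<in> F \<Longrightarrow> prob_space (density (M i) (g i))"
  shows "PiM I (\<lambda>i. if i \<in> F then density (M i) (g i) else M i)
       = density (PiM I M) (\<lambda>\<omega>. \<Prod>i\<in>F. g i (\<omega> i))"
proof -
  define M' where "M' i = (if i \<in> F then density (M i) (g i) else M i)" for i
  have sets_M': "sets (M' i) = sets (M i)" and space_M': "space (M' i) = space (M i)" for i
    by (auto simp: M'_def)
  interpret M': product_prob_space M' I
    by (intro product_prob_spaceI) (auto simp: M'_def prob_g M.prob_space_axioms)
  have density_meas: "(\<lambda>\<omega>. \<Prod>i\<in>F. g i (\<omega> i)) \<in> borel_measurable (PiM I M)"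
    using F by (intro borel_measurable_prod_ennreal) (auto intro: measurable_compose[OF measurable_component_singleton])
  have "density (PiM I M) (\<lambda>\<omega>. \<Prod>i\<in>F. g i (\<omega> i)) = PiM I M'"
  proof (rule M'.PiM_eq)
    show "sets (density (PiM I M) (\<lambda>\<omega>. \<Prod>i\<in>F. g i (\<omega> i))) = sets (PiM I M')"
      by (simp add: sets_M' cong: sets_PiM_cong)
  next
    fix J A assume J: "finite J" "J \<subseteq> I" and A: "\<And>j. j \<in> J \<Longrightarrow> A j \<in> sets (M' j)"
    have A_sets: "A j \<in> sets (M j)" if "j \<in> J" for j using A[OF that] by (simp add: sets_M')
    define h where "h i y = (if i \<in> F then g i y else 1) * (if i \<in> J then indicator (A i) y else 1)" for i y
    have h_meas: "h i \<in> borel_measurable (M i)" if "i \<in> F \<union> J" for i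
      unfolding h_def using that A_sets
      by (intro borel_measurable_times_ennreal) (cases "i \<in> F"; cases "i \<in> J"; simp)+
    have emb: "prod_emb I M' J (Pi\<^sub>E J A) = prod_emb I M J (Pi\<^sub>E J A)"
      by (simp add: prod_emb_def space_M')
    have emb_sets: "prod_emb I M J (Pi\<^sub>E J A) \<in> sets (PiM I M)"
      using J A_sets by (intro sets_PiM_I) auto
    have indicator_emb: "indicator (prod_emb I M J (Pi\<^sub>E J A)) \<omega> = (\<Prod>j\<in>J. indicator (A j) (\<omega> j) :: ennreal)"
      if "\<omega> \<in> space (PiM I M)" for \<omega>
      using that J by (auto simp: prod_emb_def space_PiM indicator_def PiE_def Pi_def split: if_splits)
    have factor: "(\<Prod>i\<in>F. g i (\<omega> i)) * indicator (prod_emb I M J (Pi\<^sub>E J A)) \<omega> = (\<Prod>i\<in>F \<union> J. h i (\<omega> i))"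
      if "\<omega> \<in> space (PiM I M)" for \<omega>
      using F J by (simp add: indicator_emb[OF that] h_def prod.distrib prod.If_cases Int_absorb1 Int_absorb2)
    have one: "integral\<^sup>N (M i) (h i) = 1" if "i \<in> F - J" for i
    proof -
      interpret prob_space "density (M i) (g i)" using prob_g that by simp
      have "integral\<^sup>N (M i) (h i) = emeasure (density (M i) (g i)) (space (M i))"
        using that by (auto simp: h_def emeasure_density intro!: nn_integral_cong)
      then show ?thesis using emeasure_space_1 by simp
    qed
    have factor_J: "integral\<^sup>N (M j) (h j) = emeasure (M' j) (A j)" if "j \<in> J" for j
      using that A_sets[OF that]
      by (cases "j \<in> F") (auto simp: M'_def h_def[abs_def] emeasure_density intro!: nn_integral_cong)
    have "emeasure (density (PiM I M) (\<lambda>\<omega>. \<Prod>i\<in>F. g i (\<omega> i))) (prod_emb I M' J (Pi\<^sub>E J A))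
       = (\<integral>\<^sup>+\<omega>. (\<Prod>i\<in>F. g i (\<omega> i)) * indicator (prod_emb I M J (Pi\<^sub>E J A)) \<omega> \<partial>PiM I M)"
      unfolding emb using emb_sets by (intro emeasure_density density_meas)
    also have "\<dots> = (\<integral>\<^sup>+\<omega>. (\<Prod>i\<in>F \<union> J. h i (\<omega> i)) \<partial>PiM I M)"
      by (intro nn_integral_cong) (simp add: factor)
    also have "\<dots> = (\<Prod>i\<in>F \<union> J. integral\<^sup>N (M i) (h i))"
      using F J h_meas by (intro nn_integral_PiM_prod) auto
    also have "\<dots> = (\<Prod>i\<in>J. integral\<^sup>N (M i) (h i)) * (\<Prod>i\<in>F - J. integral\<^sup>N (M i) (h i))"
      using F J by (subst prod.union_disjoint[symmetric]) (auto intro!: prod.cong)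
    also have "\<dots> = (\<Prod>j\<in>J. emeasure (M' j) (A j))"
      by (simp add: one factor_J)
    finally show "emeasure (density (PiM I M) (\<lambda>\<omega>. \<Prod>i\<in>F. g i (\<omega> i))) (prod_emb I M' J (Pi\<^sub>E J A))
        = (\<Prod>j\<in>J. emeasure (M' j) (A j))" .
  qed
  then show ?thesis by (simp add: M'_def[abs_def])
qed

lemma PiM_cong_restrict:
  fixes h :: "('i \<Rightarrow> 'a) \<Rightarrow> real"
  assumes "\<And>i. prob_space (M i)" "\<And>i. prob_space (M' i)"
    and J: "finite J" "J \<subseteq> I" and eq: "\<And>j. j \<in> J \<Longrightarrow> M' j = M j"
    and h: "h \<in> borel_measurable (PiM J M)"
  shows "integrable (PiM I M') (\<lambda>\<omega>. h (restrict \<omega> J)) \<longleftrightarrow> integrable (PiM I M) (\<lambda>\<omega>. h (restrict \<omega> J))"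
    and "(\<integral>\<omega>. h (restrict \<omega> J) \<partial>PiM I M') = (\<integral>\<omega>. h (restrict \<omega> J) \<partial>PiM I M)"
proof -
  interpret M: product_prob_space M I by (intro product_prob_spaceI) fact
  interpret M': product_prob_space M' I by (intro product_prob_spaceI) fact
  have PiM_J: "PiM J M' = PiM J M"
    using eq by (intro PiM_cong) auto
  have h': "h \<in> borel_measurable (PiM J M')"
    using h by (simp add: PiM_J)
  show "integrable (PiM I M') (\<lambda>\<omega>. h (restrict \<omega> J)) \<longleftrightarrow> integrable (PiM I M) (\<lambda>\<omega>. h (restrict \<omega> J))"
    unfolding M'.integrable_PiM_restrict_iff[OF J h'] M.integrable_PiM_restrict_iff[OF J h] PiM_J ..
  show "(\<integral>\<omega>. h (restrict \<omega> J) \<partial>PiM I M') = (\<integral>\<omega>. h (restrict \<omega> J) \<partial>PiM I M)"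
    unfolding M'.integral_PiM_restrict[OF J h'] M.integral_PiM_restrict[OF J h] PiM_J ..
qed

lemma emeasure_PiM_emb_cong:
  assumes "\<And>i. prob_space (M i)" "\<And>i. prob_space (M' i)"
    and J: "finite J" "J \<subseteq> I" and eq: "\<And>j. j \<in> J \<Longrightarrow> M' j = M j"
    and space: "\<And>i. space (M' i) = space (M i)" and X: "X \<in> sets (PiM J M)"
  shows "emeasure (PiM I M') (prod_emb I M J X) = emeasure (PiM I M) (prod_emb I M J X)"
proof -
  interpret M: product_prob_space M I by (intro product_prob_spaceI) fact
  interpret M': product_prob_space M' I by (intro product_prob_spaceI) fact
  have PiM_J: "PiM J M' = PiM J M"
    using eq by (intro PiM_cong) auto
  have "prod_emb I M J X = prod_emb I M' J X"
    by (simp add: prod_emb_def space)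
  then show ?thesis
    using M'.emeasure_PiM_emb'[OF J(2,1), of X] M.emeasure_PiM_emb'[OF J(2,1) X] X by (simp add: PiM_J)
qed

section \<open>Series and blocks of terms\<close>

lemma sum_lessThan_blocks:
  fixes h :: "nat \<Rightarrow> 'b::comm_monoid_add"
  assumes "n 0 = 0" "mono n"
  shows "(\<Sum>k<K. \<Sum>i\<in>{n k..<n (Suc k)}. h i) = (\<Sum>i<n K. h i)"
proof (induction K)
  case (Suc K)
  have "n K \<le> n (Suc K)" using assms(2) by (simp add: monoD)
  then have "(\<Sum>i<n (Suc K). h i) = (\<Sum>i<n K. h i) + (\<Sum>i\<in>{n K..<n (Suc K)}. h i)"
    by (simp add: sum.atLeastLessThan_concat atLeast0LessThan[symmetric])
  then show ?case using Suc by simp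
qed (use assms in simp)

lemma sums_blocks:
  fixes f :: "nat \<Rightarrow> 'b::real_normed_vector"
  assumes "f sums s" "n 0 = 0" "strict_mono n"
  shows "(\<lambda>k. \<Sum>i\<in>{n k..<n (Suc k)}. f i) sums s"
proof -
  have "(\<lambda>K. \<Sum>i<n K. f i) \<longlonglongrightarrow> s"
    using LIMSEQ_subseq_LIMSEQ[OF assms(1)[unfolded sums_def] assms(3)] by (simp add: o_def)
  then show ?thesis
    unfolding sums_def using assms(2,3) by (simp add: sum_lessThan_blocks strict_mono_mono)
qed

lemma suminf_shift_LIMSEQ_zero:
  fixes f :: "nat \<Rightarrow> real"
  assumes "summable f"
  shows "(\<lambda>k. \<Sum>i. f (i + k)) \<longlonglongrightarrow> 0"
proof -
  have "(\<lambda>k. suminf f - (\<Sum>i<k. f i)) \<longlonglongrightarrow> suminf f - suminf f"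
    using assms by (intro tendsto_intros summable_LIMSEQ)
  then show ?thesis
    using assms by (simp add: suminf_minus_initial_segment)
qed

lemma summable_square_if_nonneg:
  fixes u :: "nat \<Rightarrow> real"
  assumes "summable u" "\<And>i. 0 \<le> u i"
  shows "summable (\<lambda>i. (u i)\<^sup>2)"
proof (rule summable_comparison_test_ev[OF _ assms(1)])
  have "eventually (\<lambda>i. u i < 1) sequentially"
    using order_tendstoD(2)[OF summable_LIMSEQ_zero[OF assms(1)]] by simp
  then show "eventually (\<lambda>i. norm ((u i)\<^sup>2) \<le> u i) sequentially"
    by eventually_elim (use assms(2) in \<open>simp add: power2_eq_square mult_left_le\<close>)
qed

lemma exists_blocks_sum_le_quarter_power:
  fixes v :: "nat \<Rightarrow> real"
  assumes v: "summable v" "\<And>i. 0 \<le> v i"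
  obtains n where "n 0 = 0" "strict_mono n"
    and "\<And>k. 1 \<le> k \<Longrightarrow> (\<Sum>i\<in>{n k..<n (Suc k)}. v i) \<le> (1/4)^k"
proof -
  have "\<forall>k. \<exists>m0. \<forall>m\<ge>m0. (\<Sum>i. v (i + m)) \<le> (1/4)^k"
  proof
    fix k :: nat
    have "eventually (\<lambda>m. (\<Sum>i. v (i + m)) < (1/4)^k) sequentially"
      using order_tendstoD(2)[OF suminf_shift_LIMSEQ_zero[OF v(1)]] by simp
    then show "\<exists>m0. \<forall>m\<ge>m0. (\<Sum>i. v (i + m)) \<le> (1/4)^k"
      unfolding eventually_sequentially by (meson less_imp_le)
  qed
  then obtain m0 where m0: "\<And>k m. m0 k \<le> m \<Longrightarrow> (\<Sum>i. v (i + m)) \<le> (1/4)^k"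
    by metis
  define n where "n = rec_nat 0 (\<lambda>k nk. max (Suc nk) (m0 (Suc k)))"
  have n_Suc: "n (Suc k) = max (Suc (n k)) (m0 (Suc k))" for k
    by (simp add: n_def)
  have "strict_mono n"
    unfolding strict_mono_Suc_iff by (simp add: n_Suc less_max_iff_disj)
  moreover have "(\<Sum>i\<in>{n k..<n (Suc k)}. v i) \<le> (1/4)^k" if k1: "1 \<le> k" for k
  proof -
    obtain k' where k: "k = Suc k'" using k1 by (cases k) auto
    have "n k \<le> n (Suc k)"
      using \<open>strict_mono n\<close> by (simp add: strict_mono_less_eq)
    then have "(\<Sum>i\<in>{n k..<n (Suc k)}. v i) = (\<Sum>i\<in>{0..<n (Suc k) - n k}. v (i + n k))"
      using sum.shift_bounds_nat_ivl[of v 0 "n k" "n (Suc k) - n k"] by simp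
    also have "\<dots> \<le> (\<Sum>i. v (i + n k))"
      using v by (intro sum_le_suminf) auto
    also have "\<dots> \<le> (1/4)^k"
      using m0[of k "n k"] by (simp add: k n_Suc)
    finally show ?thesis .
  qed
  moreover have "n 0 = 0"
    by (simp add: n_def)
  ultimately show ?thesis
    using that by blast
qed

lemma AE_summable_abs_if_summable_integral:
  fixes f :: "nat \<Rightarrow> 'a \<Rightarrow> real"
  assumes int: "\<And>i. integrable M (f i)" and sum: "summable (\<lambda>i. \<integral>x. \<bar>f i x\<bar> \<partial>M)"
  shows "AE x in M. summable (\<lambda>i. \<bar>f i x\<bar>)"
proof -
  have "(\<integral>\<^sup>+x. (\<Sum>i. ennreal \<bar>f i x\<bar>) \<partial>M) = (\<Sum>i. \<integral>\<^sup>+x. ennreal \<bar>f i x\<bar> \<partial>M)"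
    using int by (intro nn_integral_suminf) auto
  also have "\<dots> = (\<Sum>i. ennreal (\<integral>x. \<bar>f i x\<bar> \<partial>M))"
    using int by (intro suminf_cong nn_integral_eq_integral) auto
  also have "\<dots> \<noteq> \<infinity>"
    unfolding infinity_ennreal_def by (rule ennreal_suminf_neq_top[OF sum]) auto
  finally have "AE x in M. (\<Sum>i. ennreal \<bar>f i x\<bar>) \<noteq> \<infinity>"
    using int by (intro nn_integral_noteq_infinite) auto
  then show ?thesis
    by eventually_elim (auto intro: summable_suminf_not_top)
qed

section \<open>Densities of infinite products\<close>

lemma emeasure_density_le_liminf:
  fixes f :: "nat \<Rightarrow> 'a \<Rightarrow> ennreal"
  assumes [measurable]: "\<And>K. f K \<in> borel_measurable M" "f' \<in> borel_measurable M" "X \<in> sets M"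
    and lim: "AE x in M. (\<lambda>K. f K x) \<longlonglongrightarrow> f' x"
  shows "emeasure (density M f') X \<le> liminf (\<lambda>K. emeasure (density M (f K)) X)"
proof -
  have "emeasure (density M f') X = (\<integral>\<^sup>+x. f' x * indicator X x \<partial>M)"
    by (simp add: emeasure_density)
  also have "\<dots> = (\<integral>\<^sup>+x. liminf (\<lambda>K. f K x * indicator X x) \<partial>M)"
    using lim
  proof (intro nn_integral_cong_AE, eventually_elim)
    case (elim x)
    then have "(\<lambda>K. f K x * indicator X x) \<longlonglongrightarrow> f' x * indicator X x"
      by (cases "x \<in> X") auto
    then show ?case
      by (simp add: lim_imp_Liminf)
  qed
  also have "\<dots> \<le> liminf (\<lambda>K. \<integral>\<^sup>+x. f K x * indicator X x \<partial>M)"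
    by (intro nn_integral_liminf) measurable
  also have "\<dots> = liminf (\<lambda>K. emeasure (density M (f K)) X)"
    by (simp add: emeasure_density)
  finally show ?thesis .
qed

lemma ennreal_eq_if_le_and_sum_ge:
  fixes a b c d :: ennreal
  assumes "a \<le> b" "c \<le> d" "b + d = 1" "1 \<le> a + c"
  shows "a = b"
proof -
  have "b \<le> 1" "d \<le> 1"
    using assms(3) le_iff_add[of b 1] le_iff_add[of d 1] by (auto simp: add.commute)
  then obtain b' d' where b: "b = ennreal b'" "0 \<le> b'" and d: "d = ennreal d'" "0 \<le> d'"
    by (metis ennreal_cases ennreal_one_neq_top top.extremum_unique)
  obtain a' c' where a: "a = ennreal a'" "0 \<le> a'" and c: "c = ennreal c'" "0 \<le> c'"
    using assms(1,2) b d by (metis ennreal_cases ennreal_neq_top top.extremum_uniqueI)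
  have "a' \<le> b'" "c' \<le> d'" using assms(1,2) a b c d by auto
  moreover have "b' + d' = 1" "1 \<le> a' + c'"
    using assms(3,4) a b c d by (simp_all flip: ennreal_plus add: ennreal_1[symmetric] del: ennreal_1)
  ultimately show ?thesis using a b by simp
qed

lemma emeasure_eq_if_le_and_compl_le:
  assumes "prob_space Q" and sets: "sets \<nu> = sets Q" and E: "E \<in> sets Q"
    and le: "emeasure \<nu> E \<le> emeasure Q E" "emeasure \<nu> (space Q - E) \<le> emeasure Q (space Q - E)"
    and mass: "1 \<le> emeasure \<nu> (space Q)"
  shows "emeasure \<nu> E = emeasure Q E"
proof -
  interpret Q: prob_space Q by fact
  have split: "emeasure R E + emeasure R (space Q - E) = emeasure R (space Q)"
    if "sets R = sets Q" for R
    using E sets.sets_into_space[OF E] that by (subst plus_emeasure) (auto simp: Un_absorb1)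
  show ?thesis
    using split[OF sets] split[OF refl] mass Q.emeasure_space_1
    by (intro ennreal_eq_if_le_and_sum_ge[OF le]) simp_all
qed

(* Fatou gives density <= PiM N on cylinder sets; total mass >= 1 forces equality. *)
lemma PiM_density_eq_of_limit:
  fixes M :: "nat \<Rightarrow> 'a measure" and g :: "nat \<Rightarrow> 'a \<Rightarrow> ennreal"
  assumes M: "\<And>i. prob_space (M i)"
    and [measurable]: "\<And>i. g i \<in> borel_measurable (M i)"
    and prob_g: "\<And>i. prob_space (density (M i) (g i))"
    and n: "strict_mono n"
    and [measurable]: "G \<in> borel_measurable (PiM UNIV M)"
    and lim: "AE \<omega> in PiM UNIV M. (\<lambda>K. \<Prod>i<n K. g i (\<omega> i)) \<longlonglongrightarrow> G \<omega>"
    and mass: "1 \<le> (\<integral>\<^sup>+\<omega>. G \<omega> \<partial>PiM UNIV M)"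
  shows "PiM UNIV (\<lambda>i. density (M i) (g i)) = density (PiM UNIV M) G"
proof -
  interpret product_prob_space M UNIV
    by (intro product_prob_spaceI M)
  define N where "N i = density (M i) (g i)" for i
  interpret N: product_prob_space N UNIV
    by (intro product_prob_spaceI) (simp add: N_def prob_g)
  define H where "H K i = (if i \<in> {..<n K} then N i else M i)" for K i
  have H_density: "PiM UNIV (H K) = density (PiM UNIV M) (\<lambda>\<omega>. \<Prod>i<n K. g i (\<omega> i))" for K
    unfolding H_def N_def by (intro PiM_density_finite) (auto simp: prob_g)
  have space_N: "space (N i) = space (M i)" for i
    by (simp add: N_def)
  have sets_N: "sets (PiM J N) = sets (PiM J M)" for J
    by (simp add: N_def cong: sets_PiM_cong)
  have "emeasure (density (PiM UNIV M) G) (space (PiM UNIV M))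
      = (\<integral>\<^sup>+\<omega>. G \<omega> * indicator (space (PiM UNIV M)) \<omega> \<partial>PiM UNIV M)"
    by (intro emeasure_density) auto
  also have "\<dots> = (\<integral>\<^sup>+\<omega>. G \<omega> \<partial>PiM UNIV M)"
    by (intro nn_integral_cong) simp
  finally have mass_density: "1 \<le> emeasure (density (PiM UNIV M) G) (space (PiM UNIV N))"
    using mass by (simp add: space_PiM space_N)
  have cylinder: "emeasure (density (PiM UNIV M) G) (prod_emb UNIV M J X) = emeasure (PiM UNIV N) (prod_emb UNIV M J X)"
    if J: "finite J" and X: "X \<in> sets (PiM J M)" for J X
  proof -
    obtain m where "J \<subseteq> {..<m}"
      using finite_nat_bounded[OF J] by blast
    then have J_n: "J \<subseteq> {..<n K}" if "m \<le> K" for K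
      using seq_suble[OF n, of K] that by auto
    have H_eq: "emeasure (PiM UNIV (H K)) (prod_emb UNIV M J Y) = emeasure (PiM UNIV N) (prod_emb UNIV M J Y)"
      if K: "m \<le> K" and Y: "Y \<in> sets (PiM J M)" for K Y
    proof -
      have "prod_emb UNIV M J Y = prod_emb UNIV N J Y"
        by (simp add: prod_emb_def space_N)
      moreover have "emeasure (PiM UNIV (H K)) (prod_emb UNIV N J Y) = emeasure (PiM UNIV N) (prod_emb UNIV N J Y)"
        using J_n[OF K] J Y by (intro emeasure_PiM_emb_cong) (auto simp: H_def N.prob_space M space_N sets_N)
      ultimately show ?thesis by simp
    qed
    have le: "emeasure (density (PiM UNIV M) G) (prod_emb UNIV M J Y) \<le> emeasure (PiM UNIV N) (prod_emb UNIV M J Y)"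
      if Y: "Y \<in> sets (PiM J M)" for Y
    proof -
      have "prod_emb UNIV M J Y \<in> sets (PiM UNIV M)"
        using J Y by (intro measurable_prod_emb) auto
      then have "emeasure (density (PiM UNIV M) G) (prod_emb UNIV M J Y)
          \<le> liminf (\<lambda>K. emeasure (PiM UNIV (H K)) (prod_emb UNIV M J Y))"
        unfolding H_density by (intro emeasure_density_le_liminf[OF _ _ _ lim]) auto
      also have "\<dots> = emeasure (PiM UNIV N) (prod_emb UNIV M J Y)"
        using H_eq[OF _ Y] by (intro lim_imp_Liminf tendsto_eventually) (auto simp: eventually_sequentially)
      finally show ?thesis .
    qed
    have prod_emb_space: "prod_emb UNIV M J (space (PiM J M)) = space (PiM UNIV N)"
      by (auto simp: prod_emb_def space_PiM space_N PiE_iff)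
    show ?thesis
      using le[OF X] le[of "space (PiM J M) - X"] X N.P.prob_space_axioms mass_density
      by (intro emeasure_eq_if_le_and_compl_le) (auto simp: prod_emb_space sets_N J)
  qed
  have "density (PiM UNIV M) G = PiM UNIV N"
  proof (rule N.PiM_eq)
    show "sets (density (PiM UNIV M) G) = sets (PiM UNIV N)"
      by (simp add: N_def cong: sets_PiM_cong)
    show "emeasure (density (PiM UNIV M) G) (prod_emb UNIV N J (Pi\<^sub>E J A)) = (\<Prod>j\<in>J. emeasure (N j) (A j))"
      if "finite J" "J \<subseteq> UNIV" "\<And>j. j \<in> J \<Longrightarrow> A j \<in> sets (N j)" for J A
    proof -
      have "prod_emb UNIV N J (Pi\<^sub>E J A) = prod_emb UNIV M J (Pi\<^sub>E J A)"
        by (simp add: prod_emb_def space_N)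
      moreover have "Pi\<^sub>E J A \<in> sets (PiM J M)"
        using that by (auto simp: N_def intro: sets_PiM_I_finite)
      ultimately show ?thesis
        using cylinder[OF that(1)] N.emeasure_PiM_emb[OF that(2,1,3)] by simp
    qed
  qed
  then show ?thesis by (simp add: N_def[abs_def])
qed

lemma KL_divergence_density_exp:
  fixes S :: "'a \<Rightarrow> real"
  assumes "prob_space P" "prob_space Q"
    and [measurable]: "S \<in> borel_measurable P"
    and Q: "Q = density P (\<lambda>\<omega>. ennreal (exp (- S \<omega>)))"
    and int: "integrable P S"
  shows "absolutely_continuous P Q" and "absolutely_continuous Q P"
    and "integrable P (entropy_density (exp 1) Q P)"
    and "KL_divergence (exp 1) Q P = integral\<^sup>L P S"
proof -
  interpret P: prob_space P by fact
  interpret Q: prob_space Q by fact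
  have sets_Q: "sets Q = sets P"
    by (simp add: Q)
  have S_Q[measurable]: "S \<in> borel_measurable Q"
    by (simp add: measurable_cong_sets[OF sets_Q refl])
  have P: "density Q (\<lambda>\<omega>. ennreal (exp (S \<omega>))) = P"
  proof -
    have "density Q (\<lambda>\<omega>. ennreal (exp (S \<omega>)))
        = density P (\<lambda>\<omega>. ennreal (exp (- S \<omega>)) * ennreal (exp (S \<omega>)))"
      unfolding Q by (rule density_density_eq) auto
    also have "(\<lambda>\<omega>. ennreal (exp (- S \<omega>)) * ennreal (exp (S \<omega>))) = (\<lambda>_. 1)"
      by (auto simp: ennreal_mult[symmetric] exp_minus_inverse mult.commute)
    finally show ?thesis
      by (simp add: density_1)
  qed
  show "absolutely_continuous P Q"
    unfolding Q by (rule absolutely_continuousI_density) measurable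
  show "absolutely_continuous Q P"
    unfolding P[symmetric] by (rule absolutely_continuousI_density) measurable
  have "AE \<omega> in Q. ennreal (exp (S \<omega>)) = RN_deriv Q P \<omega>"
    using P P.prob_space_axioms
    by (intro RN_deriv_unique_sigma_finite) (auto intro: prob_space_imp_sigma_finite)
  then have "AE \<omega> in density Q (\<lambda>\<omega>. ennreal (exp (S \<omega>))). ennreal (exp (S \<omega>)) = RN_deriv Q P \<omega>"
    by (subst AE_density) auto
  then have "AE \<omega> in P. entropy_density (exp 1) Q P \<omega> = S \<omega>"
    unfolding P
  proof eventually_elim
    case (elim \<omega>)
    then have "enn2real (RN_deriv Q P \<omega>) = exp (S \<omega>)"
      by (metis enn2real_ennreal exp_ge_zero)
    then show ?case
      by (simp add: entropy_density_def log_def)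
  qed
  note entropy_eq = this
  have entropy_meas: "entropy_density (exp 1) Q P \<in> borel_measurable P"
    using measurable_entropy_density[of "exp 1" Q P] by (simp add: measurable_cong_sets[OF sets_Q refl])
  show "integrable P (entropy_density (exp 1) Q P)"
    using integrable_cong_AE[OF entropy_meas _ entropy_eq] int by simp
  show "KL_divergence (exp 1) Q P = integral\<^sup>L P S"
    unfolding KL_divergence_def using integral_cong_AE[OF entropy_meas _ entropy_eq] by simp
qed

section \<open>Products of likelihood ratios\<close>

(* L i is the log-likelihood ratio log (dM_i / dN_i); its mean is the KL divergence of M_i from N_i. *)
locale product_log_likelihood = product_prob_space M UNIV for M :: "nat \<Rightarrow> 'a measure" +
  fixes L :: "nat \<Rightarrow> 'a \<Rightarrow> real"
  assumes measurable_L[measurable]: "\<And>i. L i \<in> borel_measurable (M i)"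
    and prob_space_density: "\<And>i. prob_space (density (M i) (\<lambda>y. ennreal (exp (- L i y))))"
    and integrable_L_square: "\<And>i. integrable (M i) (\<lambda>y. (L i y)\<^sup>2)"
    and summable_mean: "summable (\<lambda>i. \<integral>y. L i y \<partial>M i)"
    and summable_variance: "summable (\<lambda>i. \<integral>y. (L i y - (\<integral>z. L i z \<partial>M i))\<^sup>2 \<partial>M i)"
begin

definition N :: "nat \<Rightarrow> 'a measure" where
  "N i = density (M i) (\<lambda>y. ennreal (exp (- L i y)))"

lemma prob_space_N: "prob_space (N i)"
  unfolding N_def by (rule prob_space_density)

lemma integrable_L: "integrable (M i) (L i)"
  using measurable_L integrable_L_square by (rule M.square_integrable_imp_integrable)

lemma mean_nonneg: "0 \<le> (\<integral>y. L i y \<partial>M i)"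
proof -
  interpret N: prob_space "N i"
    by (rule prob_space_N)
  have "emeasure (N i) (space (M i)) = (\<integral>\<^sup>+y. ennreal (exp (- L i y)) * indicator (space (M i)) y \<partial>M i)"
    unfolding N_def by (intro emeasure_density) auto
  also have "\<dots> = (\<integral>\<^sup>+y. ennreal (exp (- L i y)) \<partial>M i)"
    by (intro nn_integral_cong) simp
  finally have "(\<integral>\<^sup>+y. ennreal (exp (- L i y)) \<partial>M i) = ennreal 1"
    using N.emeasure_space_1 by (simp add: N_def)
  then have int_exp: "integrable (M i) (\<lambda>y. exp (- L i y))" and "(\<integral>y. exp (- L i y) \<partial>M i) = 1"
    using nn_integral_eq_integrable[of "\<lambda>y. exp (- L i y)" "M i" 1] by auto
  then have "0 = (\<integral>y. 1 - exp (- L i y) \<partial>M i)"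
    by (simp add: M.prob_space)
  also have "\<dots> \<le> (\<integral>y. L i y \<partial>M i)"
  proof (rule integral_mono)
    show "1 - exp (- L i y) \<le> L i y" for y
      using exp_ge_add_one_self[of "- L i y"] by simp
  qed (use int_exp integrable_L in auto)
  finally show ?thesis .
qed

lemma exists_blocks:
  obtains n where "n 0 = 0" "strict_mono n"
    and "summable (\<lambda>k. \<integral>\<omega>. \<bar>\<Sum>i\<in>{n k..<n (Suc k)}. L i (\<omega> i)\<bar> \<partial>PiM UNIV M)"
proof -
  define m where "m i = (\<integral>y. L i y \<partial>M i)" for i
  define v where "v i = (\<integral>y. (L i y - m i)\<^sup>2 \<partial>M i)" for i
  have v_nonneg: "0 \<le> v i" for i
    by (simp add: v_def)
  have "summable v"
    using summable_variance by (simp add: v_def[abs_def] m_def)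
  then obtain n where n: "n 0 = 0" "strict_mono n"
    and small: "\<And>k. 1 \<le> k \<Longrightarrow> (\<Sum>i\<in>{n k..<n (Suc k)}. v i) \<le> (1/4)^k"
    using exists_blocks_sum_le_quarter_power v_nonneg by blast
  define c where "c k = (\<Sum>i\<in>{n k..<n (Suc k)}. m i)" for k
  \<comment> \<open>with a = 2^k in integral_abs_sum_le, block k contributes at most 2^-k besides its mean c k\<close>
  have c_nonneg: "0 \<le> c k" for k
    unfolding c_def m_def by (intro sum_nonneg mean_nonneg)
  have "c sums (\<Sum>i. m i)"
    unfolding c_def using summable_mean n by (intro sums_blocks) (auto simp: m_def)
  then have summable_bound: "summable (\<lambda>k. (1/2)^k + c k)"
    by (intro summable_add summable_geometric) (auto simp: sums_iff)
  have bound: "norm (\<integral>\<omega>. \<bar>\<Sum>i\<in>{n k..<n (Suc k)}. L i (\<omega> i)\<bar> \<partial>PiM UNIV M) \<le> (1/2)^k + c k"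
    if "1 \<le> k" for k
  proof -
    have "(\<integral>\<omega>. \<bar>\<Sum>i\<in>{n k..<n (Suc k)}. L i (\<omega> i)\<bar> \<partial>PiM UNIV M)
        \<le> (2^k * (\<Sum>i\<in>{n k..<n (Suc k)}. v i) + 1 / 2^k) / 2 + \<bar>c k\<bar>"
      using integral_abs_sum_le[of "{n k..<n (Suc k)}" L "2^k"] integrable_L_square
      by (simp add: v_def m_def c_def)
    also have "\<dots> \<le> (2^k * (1/4)^k + 1 / 2^k) / 2 + c k"
      using small[OF that] c_nonneg[of k] by (simp add: mult_left_mono)
    also have "\<dots> = (1/2)^k + c k"
    proof -
      have "(2::real)^k * (1/4)^k = (1/2)^k"
        by (subst power_mult_distrib[symmetric]) simp
      moreover have "1 / (2::real)^k = (1/2)^k"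
        by (simp add: power_divide)
      ultimately show ?thesis by simp
    qed
    finally show ?thesis
      by (simp add: integral_nonneg_AE)
  qed
  have "eventually (\<lambda>k. norm (\<integral>\<omega>. \<bar>\<Sum>i\<in>{n k..<n (Suc k)}. L i (\<omega> i)\<bar> \<partial>PiM UNIV M) \<le> (1/2)^k + c k) sequentially"
    unfolding eventually_sequentially using bound by blast
  then have "summable (\<lambda>k. \<integral>\<omega>. \<bar>\<Sum>i\<in>{n k..<n (Suc k)}. L i (\<omega> i)\<bar> \<partial>PiM UNIV M)"
    using summable_bound by (rule summable_comparison_test_ev)
  with n that show ?thesis by blast
qed

end

locale product_log_likelihood_blocks = product_log_likelihood +
  fixes n :: "nat \<Rightarrow> nat"
  assumes n_0: "n 0 = 0" and strict_mono_n: "strict_mono n"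
    and summable_integral_abs_block:
      "summable (\<lambda>k. \<integral>\<omega>. \<bar>\<Sum>i\<in>{n k..<n (Suc k)}. L i (\<omega> i)\<bar> \<partial>PiM UNIV M)"
begin

definition block :: "nat \<Rightarrow> (nat \<Rightarrow> 'a) \<Rightarrow> real" where
  "block k \<omega> = (\<Sum>i\<in>{n k..<n (Suc k)}. L i (\<omega> i))"

definition log_ratio :: "(nat \<Rightarrow> 'a) \<Rightarrow> real" where
  "log_ratio \<omega> = (\<Sum>k. block k \<omega>)"

lemma measurable_block[measurable]: "block k \<in> borel_measurable (PiM UNIV M)"
  unfolding block_def by measurable

lemma measurable_log_ratio[measurable]: "log_ratio \<in> borel_measurable (PiM UNIV M)"
  unfolding log_ratio_def by measurable

lemma integrable_block: "integrable (PiM UNIV M) (block k)"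
  and integral_block: "integral\<^sup>L (PiM UNIV M) (block k) = (\<Sum>i\<in>{n k..<n (Suc k)}. \<integral>y. L i y \<partial>M i)"
  using integrable_L by (simp_all add: block_def[abs_def] integrable_PiM_component_iff integral_PiM_component)

lemma AE_summable_block: "AE \<omega> in PiM UNIV M. summable (\<lambda>k. \<bar>block k \<omega>\<bar>)"
  using integrable_block summable_integral_abs_block[folded block_def]
  by (rule AE_summable_abs_if_summable_integral)

lemma sums_integral_block:
  "(\<lambda>k. integral\<^sup>L (PiM UNIV M) (block k)) sums (\<Sum>i. \<integral>y. L i y \<partial>M i)"
  unfolding integral_block using summable_mean n_0 strict_mono_n by (intro sums_blocks) auto

lemma integrable_log_ratio: "integrable (PiM UNIV M) log_ratio"
  and integral_log_ratio: "integral\<^sup>L (PiM UNIV M) log_ratio = (\<Sum>i. \<integral>y. L i y \<partial>M i)"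
proof -
  have "AE \<omega> in PiM UNIV M. summable (\<lambda>k. norm (block k \<omega>))"
    and "summable (\<lambda>k. \<integral>\<omega>. norm (block k \<omega>) \<partial>PiM UNIV M)"
    using AE_summable_block summable_integral_abs_block[folded block_def] by simp_all
  note sums = integrable_block this
  show "integrable (PiM UNIV M) log_ratio" "integral\<^sup>L (PiM UNIV M) log_ratio = (\<Sum>i. \<integral>y. L i y \<partial>M i)"
    unfolding log_ratio_def[abs_def] using integrable_suminf[OF sums] integral_suminf[OF sums] sums_integral_block
    by (simp_all add: sums_iff)
qed

lemma sum_block: "(\<Sum>k<K. block k \<omega>) = (\<Sum>i<n K. L i (\<omega> i))"
  unfolding block_def using n_0 strict_mono_n by (simp add: sum_lessThan_blocks strict_mono_mono)

lemma prod_exp_L: "(\<Prod>i<n K. ennreal (exp (- L i (\<omega> i)))) = ennreal (exp (- (\<Sum>k<K. block k \<omega>)))"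
  by (simp add: sum_block prod_ennreal exp_sum flip: sum_negf)

definition hybrid :: "nat \<Rightarrow> (nat \<Rightarrow> 'a) measure" where
  "hybrid K = PiM UNIV (\<lambda>i. if i \<in> {..<n K} then N i else M i)"

lemma prob_space_hybrid_factor: "prob_space (if i \<in> {..<n K} then N i else M i)"
  by (simp add: prob_space_N prob_space)

lemma hybrid_eq_density: "hybrid K = density (PiM UNIV M) (\<lambda>\<omega>. ennreal (exp (- (\<Sum>k<K. block k \<omega>))))"
  unfolding hybrid_def N_def prod_exp_L[symmetric]
  by (intro PiM_density_finite) (auto intro: prob_space_density)

lemma sets_hybrid: "sets (hybrid K) = sets (PiM UNIV M)"
  by (simp add: hybrid_eq_density)

lemma measurable_block_hybrid[measurable]: "block k \<in> borel_measurable (hybrid K)"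
  by (simp add: measurable_cong_sets[OF sets_hybrid refl])

lemma
  assumes "K \<le> k"
  shows integrable_block_hybrid: "integrable (hybrid K) (block k)"
    and integral_block_hybrid: "integral\<^sup>L (hybrid K) (block k) = integral\<^sup>L (PiM UNIV M) (block k)"
    and integral_abs_block_hybrid:
      "(\<integral>\<omega>. \<bar>block k \<omega>\<bar> \<partial>hybrid K) = (\<integral>\<omega>. \<bar>block k \<omega>\<bar> \<partial>PiM UNIV M)"
proof -
  define J where "J = {n k..<n (Suc k)}"
  have "n K \<le> n k"
    using assms strict_mono_n by (simp add: strict_mono_less_eq)
  then have factors: "(if j \<in> {..<n K} then N j else M j) = M j" if "j \<in> J" for j
    using that by (auto simp: J_def)
  note cong = PiM_cong_restrict[OF prob_space prob_space_hybrid_factor, of J UNIV, OF _ _ factors]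
  have restrict: "(\<lambda>\<omega>. \<Sum>i\<in>J. L i (restrict \<omega> J i)) = block k"
    by (auto simp: block_def J_def intro!: sum.cong)
  have "(\<lambda>y. \<Sum>i\<in>J. L i (y i)) \<in> borel_measurable (PiM J M)"
    by measurable
  note block = cong[OF _ _ _ this, unfolded restrict hybrid_def[symmetric]]
  show "integrable (hybrid K) (block k)"
    using block integrable_block by (simp add: J_def)
  show "integral\<^sup>L (hybrid K) (block k) = integral\<^sup>L (PiM UNIV M) (block k)"
    using block by (simp add: J_def)
  have "(\<lambda>y. \<bar>\<Sum>i\<in>J. L i (y i)\<bar>) \<in> borel_measurable (PiM J M)"
    by measurable
  note abs_block = cong[OF _ _ _ this, unfolded restrict hybrid_def[symmetric]]
  have "(\<lambda>\<omega>. \<bar>\<Sum>i\<in>J. L i (restrict \<omega> J i)\<bar>) = (\<lambda>\<omega>. \<bar>block k \<omega>\<bar>)"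
    unfolding restrict[symmetric] ..
  with abs_block show "(\<integral>\<omega>. \<bar>block k \<omega>\<bar> \<partial>hybrid K) = (\<integral>\<omega>. \<bar>block k \<omega>\<bar> \<partial>PiM UNIV M)"
    by (simp add: J_def)
qed

lemma
  shows integrable_tail_hybrid: "integrable (hybrid K) (\<lambda>\<omega>. \<Sum>j. block (j + K) \<omega>)"
    and integral_tail_hybrid:
      "(\<integral>\<omega>. (\<Sum>j. block (j + K) \<omega>) \<partial>hybrid K) = (\<Sum>j. integral\<^sup>L (PiM UNIV M) (block (j + K)))"
proof -
  have "AE \<omega> in PiM UNIV M. 0 < exp (- (\<Sum>k<K. block k \<omega>)) \<longrightarrow> summable (\<lambda>j. norm (block (j + K) \<omega>))"
    using AE_summable_block
  proof eventually_elim
    case (elim \<omega>)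
    then show ?case
      using summable_iff_shift[of "\<lambda>k. \<bar>block k \<omega>\<bar>" K] by simp
  qed
  then have AE_summable: "AE \<omega> in hybrid K. summable (\<lambda>j. norm (block (j + K) \<omega>))"
    unfolding hybrid_eq_density by (subst AE_density) auto
  have summable: "summable (\<lambda>j. \<integral>\<omega>. norm (block (j + K) \<omega>) \<partial>hybrid K)"
    using summable_integral_abs_block[folded block_def]
    by (simp add: integral_abs_block_hybrid summable_iff_shift[where f="\<lambda>k. \<integral>\<omega>. \<bar>block k \<omega>\<bar> \<partial>PiM UNIV M"])
  have integrable: "integrable (hybrid K) (block (j + K))" for j
    by (simp add: integrable_block_hybrid)
  show "integrable (hybrid K) (\<lambda>\<omega>. \<Sum>j. block (j + K) \<omega>)"
    by (rule integrable_suminf[OF integrable AE_summable summable])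
  show "(\<integral>\<omega>. (\<Sum>j. block (j + K) \<omega>) \<partial>hybrid K) = (\<Sum>j. integral\<^sup>L (PiM UNIV M) (block (j + K)))"
    using integral_suminf[OF integrable AE_summable summable] by (simp add: integral_block_hybrid)
qed

(* exp (- log_ratio) is the density of hybrid K times exp (- tail), and exp (- x) >= 1 - x. *)
lemma nn_integral_exp_log_ratio_ge:
  "ennreal (1 - (\<Sum>j. integral\<^sup>L (PiM UNIV M) (block (j + K)))) \<le> (\<integral>\<^sup>+\<omega>. ennreal (exp (- log_ratio \<omega>)) \<partial>PiM UNIV M)"
proof -
  interpret hybrid: prob_space "hybrid K"
    unfolding hybrid_def by (intro prob_space_PiM prob_space_hybrid_factor)
  define R where "R \<omega> = (\<Sum>j. block (j + K) \<omega>)" for \<omega>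
  have [measurable]: "R \<in> borel_measurable (hybrid K)"
    unfolding R_def by measurable
  have "ennreal (1 - (\<Sum>j. integral\<^sup>L (PiM UNIV M) (block (j + K)))) = ennreal (\<integral>\<omega>. 1 - R \<omega> \<partial>hybrid K)"
    using integrable_tail_hybrid integral_tail_hybrid hybrid.prob_space
    by (simp add: R_def[abs_def])
  also have "\<dots> \<le> ennreal (\<integral>\<omega>. max 0 (1 - R \<omega>) \<partial>hybrid K)"
    using integrable_tail_hybrid by (intro ennreal_leI integral_mono) (auto simp: R_def[abs_def])
  also have "\<dots> = (\<integral>\<^sup>+\<omega>. ennreal (max 0 (1 - R \<omega>)) \<partial>hybrid K)"
    using integrable_tail_hybrid by (intro nn_integral_eq_integral[symmetric]) (auto simp: R_def[abs_def])
  also have "\<dots> \<le> (\<integral>\<^sup>+\<omega>. ennreal (exp (- R \<omega>)) \<partial>hybrid K)"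
  proof (intro nn_integral_mono ennreal_leI)
    show "max 0 (1 - R \<omega>) \<le> exp (- R \<omega>)" for \<omega>
      using exp_ge_add_one_self[of "- R \<omega>"] by simp
  qed
  also have "\<dots> = (\<integral>\<^sup>+\<omega>. ennreal (exp (- (\<Sum>k<K. block k \<omega>))) * ennreal (exp (- R \<omega>)) \<partial>PiM UNIV M)"
    unfolding hybrid_eq_density by (intro nn_integral_density) (auto simp: R_def[abs_def])
  also have "\<dots> = (\<integral>\<^sup>+\<omega>. ennreal (exp (- log_ratio \<omega>)) \<partial>PiM UNIV M)"
  proof (rule nn_integral_cong_AE)
    show "AE \<omega> in PiM UNIV M. ennreal (exp (- (\<Sum>k<K. block k \<omega>))) * ennreal (exp (- R \<omega>))
        = ennreal (exp (- log_ratio \<omega>))"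
      using AE_summable_block
    proof eventually_elim
      case (elim \<omega>)
      then have "log_ratio \<omega> = R \<omega> + (\<Sum>k<K. block k \<omega>)"
        unfolding log_ratio_def R_def by (intro suminf_split_initial_segment summable_rabs_cancel[OF elim])
      then show ?case
        by (simp add: exp_add[symmetric] ennreal_mult[symmetric])
    qed
  qed
  finally show ?thesis .
qed

lemma one_le_nn_integral_exp_log_ratio: "1 \<le> (\<integral>\<^sup>+\<omega>. ennreal (exp (- log_ratio \<omega>)) \<partial>PiM UNIV M)"
proof -
  have "summable (\<lambda>k. integral\<^sup>L (PiM UNIV M) (block k))"
    using sums_integral_block by (simp add: sums_iff)
  then have "(\<lambda>K. ennreal (1 - (\<Sum>j. integral\<^sup>L (PiM UNIV M) (block (j + K))))) \<longlonglongrightarrow> ennreal (1 - 0)"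
    by (intro tendsto_intros suminf_shift_LIMSEQ_zero)
  then show ?thesis
    using nn_integral_exp_log_ratio_ge by (intro LIMSEQ_le_const2) auto
qed

lemma PiM_N_eq_density: "PiM UNIV N = density (PiM UNIV M) (\<lambda>\<omega>. ennreal (exp (- log_ratio \<omega>)))"
  unfolding N_def
proof (rule PiM_density_eq_of_limit[OF prob_space _ prob_space_density strict_mono_n])
  show "(\<lambda>y. ennreal (exp (- L i y))) \<in> borel_measurable (M i)" for i
    by measurable
  show "(\<lambda>\<omega>. ennreal (exp (- log_ratio \<omega>))) \<in> borel_measurable (PiM UNIV M)"
    by measurable
  show "AE \<omega> in PiM UNIV M. (\<lambda>K. \<Prod>i<n K. ennreal (exp (- L i (\<omega> i)))) \<longlonglongrightarrow> ennreal (exp (- log_ratio \<omega>))"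
    using AE_summable_block
  proof eventually_elim
    case (elim \<omega>)
    then have "(\<lambda>K. \<Sum>k<K. block k \<omega>) \<longlonglongrightarrow> log_ratio \<omega>"
      unfolding log_ratio_def by (intro summable_LIMSEQ summable_rabs_cancel[OF elim])
    then show ?case
      unfolding prod_exp_L by (intro tendsto_intros)
  qed
  show "1 \<le> (\<integral>\<^sup>+\<omega>. ennreal (exp (- log_ratio \<omega>)) \<partial>PiM UNIV M)"
    by (rule one_le_nn_integral_exp_log_ratio)
qed

end

context product_log_likelihood
begin

theorem KL_divergence_PiM:
  shows "absolutely_continuous (PiM UNIV M) (PiM UNIV N)"
    and "absolutely_continuous (PiM UNIV N) (PiM UNIV M)"
    and "integrable (PiM UNIV M) (entropy_density (exp 1) (PiM UNIV N) (PiM UNIV M))"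
    and "KL_divergence (exp 1) (PiM UNIV N) (PiM UNIV M) = (\<Sum>i. \<integral>y. L i y \<partial>M i)"
proof -
  obtain n where "n 0 = 0" "strict_mono n"
    and "summable (\<lambda>k. \<integral>\<omega>. \<bar>\<Sum>i\<in>{n k..<n (Suc k)}. L i (\<omega> i)\<bar> \<partial>PiM UNIV M)"
    by (rule exists_blocks)
  then interpret product_log_likelihood_blocks M L n
    by unfold_locales
  have "prob_space (PiM UNIV N)"
    by (intro prob_space_PiM prob_space_N)
  note KL = KL_divergence_density_exp[OF P.prob_space_axioms this measurable_log_ratio PiM_N_eq_density integrable_log_ratio]
  show "absolutely_continuous (PiM UNIV M) (PiM UNIV N)"
    and "absolutely_continuous (PiM UNIV N) (PiM UNIV M)"
    and "integrable (PiM UNIV M) (entropy_density (exp 1) (PiM UNIV N) (PiM UNIV M))"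
    and "KL_divergence (exp 1) (PiM UNIV N) (PiM UNIV M) = (\<Sum>i. \<integral>y. L i y \<partial>M i)"
    using KL integral_log_ratio by simp_all
qed

end

section \<open>Gaussian measures\<close>

lemma sets_gauss [simp, measurable_cong]: "sets (gauss m v) = sets borel"
  by (simp add: gauss_def)

lemma prob_space_gauss: "0 < v \<Longrightarrow> prob_space (gauss m v)"
  unfolding gauss_def by (rule prob_space_normal_density) simp

lemma has_bochner_integral_gauss_quartic:
  fixes \<mu> \<sigma> c0 c1 c2 c3 c4 :: real
  assumes \<sigma>: "0 < \<sigma>"
  shows "has_bochner_integral (gauss \<mu> (\<sigma>\<^sup>2))
      (\<lambda>y. c0 + c1 * (y - \<mu>) + c2 * (y - \<mu>)\<^sup>2 + c3 * (y - \<mu>)^3 + c4 * (y - \<mu>)^4)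
      (c0 + c2 * \<sigma>\<^sup>2 + 3 * c4 * \<sigma>^4)"
proof -
  let ?nd = "normal_density \<mu> \<sigma>"
  have m0: "has_bochner_integral lborel (\<lambda>y. ?nd y * (y - \<mu>)^(2 * 0)) 1"
    using normal_moment_even[OF \<sigma>, of \<mu> 0] by simp
  have m1: "has_bochner_integral lborel (\<lambda>y. ?nd y * (y - \<mu>)^(2 * 0 + 1)) 0"
    using normal_moment_odd[OF \<sigma>, of \<mu> 0] by simp
  have m2: "has_bochner_integral lborel (\<lambda>y. ?nd y * (y - \<mu>)^(2 * 1)) (\<sigma>\<^sup>2)"
    using normal_moment_even[OF \<sigma>, of \<mu> 1] \<sigma> by simp
  have m3: "has_bochner_integral lborel (\<lambda>y. ?nd y * (y - \<mu>)^(2 * 1 + 1)) 0"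
    using normal_moment_odd[OF \<sigma>, of \<mu> 1] by simp
  have "fact (2 * 2) / ((2 / \<sigma>\<^sup>2) ^ 2 * fact 2) = (3 * \<sigma>^4 :: real)"
    using \<sigma> by (simp add: fact_numeral power2_eq_square field_simps power4_eq_xxxx)
  then have m4: "has_bochner_integral lborel (\<lambda>y. ?nd y * (y - \<mu>)^(2 * 2)) (3 * \<sigma>^4)"
    using normal_moment_even[OF \<sigma>, of \<mu> 2] by simp
  have "has_bochner_integral lborel
      (\<lambda>y. c0 * (?nd y * (y - \<mu>)^(2 * 0)) + c1 * (?nd y * (y - \<mu>)^(2 * 0 + 1))
        + c2 * (?nd y * (y - \<mu>)^(2 * 1)) + c3 * (?nd y * (y - \<mu>)^(2 * 1 + 1))
        + c4 * (?nd y * (y - \<mu>)^(2 * 2)))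
      (c0 * 1 + c1 * 0 + c2 * \<sigma>\<^sup>2 + c3 * 0 + c4 * (3 * \<sigma>^4))"
    by (intro has_bochner_integral_add has_bochner_integral_mult_right m0 m1 m2 m3 m4)
  then have "has_bochner_integral lborel
      (\<lambda>y. ?nd y *\<^sub>R (c0 + c1 * (y - \<mu>) + c2 * (y - \<mu>)\<^sup>2 + c3 * (y - \<mu>)^3 + c4 * (y - \<mu>)^4))
      (c0 + c2 * \<sigma>\<^sup>2 + 3 * c4 * \<sigma>^4)"
    by (simp add: ring_distribs mult_ac)
  then show ?thesis
    unfolding gauss_def real_sqrt_abs abs_of_pos[OF \<sigma>]
    by (rule has_bochner_integral_density[rotated 3]) auto
qed

definition gauss_log_ratio :: "real \<Rightarrow> real \<Rightarrow> real \<Rightarrow> real \<Rightarrow> real \<Rightarrow> real" where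
  "gauss_log_ratio \<mu> \<sigma> m s y = ln (normal_density \<mu> \<sigma> y / normal_density m s y)"

definition gauss_KL :: "real \<Rightarrow> real \<Rightarrow> real \<Rightarrow> real \<Rightarrow> real" where
  "gauss_KL \<mu> \<sigma> m s = ln (s / \<sigma>) + (\<sigma>\<^sup>2 + (\<mu> - m)\<^sup>2) / (2 * s\<^sup>2) - 1 / 2"

lemma gauss_log_ratio_quadratic:
  fixes \<mu> m \<sigma> s y :: real
  assumes \<sigma>: "0 < \<sigma>" and s: "0 < s"
  shows "gauss_log_ratio \<mu> \<sigma> m s y =
    (ln (s / \<sigma>) + (\<mu> - m)\<^sup>2 / (2 * s\<^sup>2)) + ((\<mu> - m) / s\<^sup>2) * (y - \<mu>) + (1 / (2 * s\<^sup>2) - 1 / (2 * \<sigma>\<^sup>2)) * (y - \<mu>)\<^sup>2"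
proof -
  have ln_density: "ln (normal_density c t y) = - ln (sqrt (2 * pi)) - ln t - (y - c)\<^sup>2 / (2 * t\<^sup>2)"
    if t: "0 < t" for c t
  proof -
    have "normal_density c t y = (1 / (sqrt (2 * pi) * t)) * exp (- (y - c)\<^sup>2 / (2 * t\<^sup>2))"
      using t by (simp add: normal_density_def real_sqrt_mult)
    then show ?thesis
      using t by (simp add: ln_mult ln_div)
  qed
  have "gauss_log_ratio \<mu> \<sigma> m s y = ln (normal_density \<mu> \<sigma> y) - ln (normal_density m s y)"
    using normal_density_pos[OF \<sigma>, of \<mu> y] normal_density_pos[OF s, of m y]
    by (simp add: gauss_log_ratio_def ln_div)
  also have "\<dots> = (ln s - ln \<sigma>) + (y - m)\<^sup>2 / (2 * s\<^sup>2) - (y - \<mu>)\<^sup>2 / (2 * \<sigma>\<^sup>2)"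
    using ln_density[OF s, of m] ln_density[OF \<sigma>, of \<mu>] by simp
  also have "\<dots> = (ln (s / \<sigma>) + (\<mu> - m)\<^sup>2 / (2 * s\<^sup>2)) + ((\<mu> - m) / s\<^sup>2) * (y - \<mu>)
      + (1 / (2 * s\<^sup>2) - 1 / (2 * \<sigma>\<^sup>2)) * (y - \<mu>)\<^sup>2"
    using \<sigma> s by (simp add: ln_div field_simps power2_eq_square)
  finally show ?thesis .
qed

lemma density_gauss_exp_log_ratio:
  fixes \<mu> m \<sigma> s :: real
  assumes \<sigma>: "0 < \<sigma>" and s: "0 < s"
  shows "density (gauss \<mu> (\<sigma>\<^sup>2)) (\<lambda>y. ennreal (exp (- gauss_log_ratio \<mu> \<sigma> m s y))) = gauss m (s\<^sup>2)"
proof -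
  have "normal_density \<mu> \<sigma> y * exp (- gauss_log_ratio \<mu> \<sigma> m s y) = normal_density m s y" for y
    using normal_density_pos[OF \<sigma>, of \<mu> y] normal_density_pos[OF s, of m y]
    by (simp add: gauss_log_ratio_def exp_minus)
  then have "(\<lambda>y. ennreal (normal_density \<mu> \<sigma> y) * ennreal (exp (- gauss_log_ratio \<mu> \<sigma> m s y)))
      = (\<lambda>y. ennreal (normal_density m s y))"
    using normal_density_nonneg by (simp add: ennreal_mult[symmetric])
  moreover have "density (gauss \<mu> (\<sigma>\<^sup>2)) (\<lambda>y. ennreal (exp (- gauss_log_ratio \<mu> \<sigma> m s y)))
      = density lborel (\<lambda>y. ennreal (normal_density \<mu> \<sigma> y) * ennreal (exp (- gauss_log_ratio \<mu> \<sigma> m s y)))"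
    unfolding gauss_def real_sqrt_abs abs_of_pos[OF \<sigma>]
    by (intro density_density_eq) (auto simp: gauss_log_ratio_def)
  ultimately show ?thesis
    using s by (simp add: gauss_def)
qed

lemma gauss_log_ratio_moments:
  fixes \<mu> m \<sigma> s :: real
  assumes \<sigma>: "0 < \<sigma>" and s: "0 < s"
  shows "integrable (gauss \<mu> (\<sigma>\<^sup>2)) (\<lambda>y. (gauss_log_ratio \<mu> \<sigma> m s y)\<^sup>2)"
    and "(\<integral>y. gauss_log_ratio \<mu> \<sigma> m s y \<partial>gauss \<mu> (\<sigma>\<^sup>2)) = gauss_KL \<mu> \<sigma> m s"
    and "(\<integral>y. (gauss_log_ratio \<mu> \<sigma> m s y - gauss_KL \<mu> \<sigma> m s)\<^sup>2 \<partial>gauss \<mu> (\<sigma>\<^sup>2))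
          = (\<mu> - m)\<^sup>2 * \<sigma>\<^sup>2 / s^4 + 2 * (1 / (2 * \<sigma>\<^sup>2) - 1 / (2 * s\<^sup>2))\<^sup>2 * \<sigma>^4"
proof -
  define \<alpha> where "\<alpha> = ln (s / \<sigma>) + (\<mu> - m)\<^sup>2 / (2 * s\<^sup>2)"
  define \<beta> where "\<beta> = (\<mu> - m) / s\<^sup>2"
  define \<gamma> where "\<gamma> = 1 / (2 * s\<^sup>2) - 1 / (2 * \<sigma>\<^sup>2)"
  have L: "gauss_log_ratio \<mu> \<sigma> m s y = \<alpha> + \<beta> * (y - \<mu>) + \<gamma> * (y - \<mu>)\<^sup>2" for y
    unfolding \<alpha>_def \<beta>_def \<gamma>_def by (rule gauss_log_ratio_quadratic[OF \<sigma> s])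
  have KL: "gauss_KL \<mu> \<sigma> m s = \<alpha> + \<gamma> * \<sigma>\<^sup>2"
    using \<sigma> s by (simp add: gauss_KL_def \<alpha>_def \<gamma>_def field_simps)
  have "has_bochner_integral (gauss \<mu> (\<sigma>\<^sup>2)) (gauss_log_ratio \<mu> \<sigma> m s) (\<alpha> + \<gamma> * \<sigma>\<^sup>2)"
    using has_bochner_integral_gauss_quartic[OF \<sigma>, of \<mu> \<alpha> \<beta> \<gamma> 0 0] by (simp add: L[abs_def])
  then show "(\<integral>y. gauss_log_ratio \<mu> \<sigma> m s y \<partial>gauss \<mu> (\<sigma>\<^sup>2)) = gauss_KL \<mu> \<sigma> m s"
    by (simp add: KL has_bochner_integral_integral_eq)
  have square: "(\<lambda>y. (gauss_log_ratio \<mu> \<sigma> m s y)\<^sup>2) = (\<lambda>y. \<alpha>\<^sup>2 + (2 * \<alpha> * \<beta>) * (y - \<mu>)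
      + (\<beta>\<^sup>2 + 2 * \<alpha> * \<gamma>) * (y - \<mu>)\<^sup>2 + (2 * \<beta> * \<gamma>) * (y - \<mu>)^3 + \<gamma>\<^sup>2 * (y - \<mu>)^4)"
    unfolding L by (intro ext) algebra
  show "integrable (gauss \<mu> (\<sigma>\<^sup>2)) (\<lambda>y. (gauss_log_ratio \<mu> \<sigma> m s y)\<^sup>2)"
    unfolding square by (rule integrable.intros has_bochner_integral_gauss_quartic[OF \<sigma>])+
  have centered_square: "(\<lambda>y. (gauss_log_ratio \<mu> \<sigma> m s y - gauss_KL \<mu> \<sigma> m s)\<^sup>2) = (\<lambda>y. \<gamma>\<^sup>2 * \<sigma>^4
      + (- 2 * \<beta> * \<gamma> * \<sigma>\<^sup>2) * (y - \<mu>) + (\<beta>\<^sup>2 - 2 * \<gamma>\<^sup>2 * \<sigma>\<^sup>2) * (y - \<mu>)\<^sup>2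
      + (2 * \<beta> * \<gamma>) * (y - \<mu>)^3 + \<gamma>\<^sup>2 * (y - \<mu>)^4)"
    unfolding L KL by (intro ext) algebra
  have "(\<integral>y. (gauss_log_ratio \<mu> \<sigma> m s y - gauss_KL \<mu> \<sigma> m s)\<^sup>2 \<partial>gauss \<mu> (\<sigma>\<^sup>2))
      = \<gamma>\<^sup>2 * \<sigma>^4 + (\<beta>\<^sup>2 - 2 * \<gamma>\<^sup>2 * \<sigma>\<^sup>2) * \<sigma>\<^sup>2 + 3 * \<gamma>\<^sup>2 * \<sigma>^4"
    unfolding centered_square by (intro has_bochner_integral_integral_eq has_bochner_integral_gauss_quartic[OF \<sigma>])
  also have "\<dots> = (\<mu> - m)\<^sup>2 * \<sigma>\<^sup>2 / s^4 + 2 * (1 / (2 * \<sigma>\<^sup>2) - 1 / (2 * s\<^sup>2))\<^sup>2 * \<sigma>^4"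
    unfolding \<beta>_def \<gamma>_def using s by (simp add: field_simps power2_eq_square power4_eq_xxxx)
  finally show "(\<integral>y. (gauss_log_ratio \<mu> \<sigma> m s y - gauss_KL \<mu> \<sigma> m s)\<^sup>2 \<partial>gauss \<mu> (\<sigma>\<^sup>2))
      = (\<mu> - m)\<^sup>2 * \<sigma>\<^sup>2 / s^4 + 2 * (1 / (2 * \<sigma>\<^sup>2) - 1 / (2 * s\<^sup>2))\<^sup>2 * \<sigma>^4" .
qed

lemma gauss_KL_nonneg:
  fixes \<mu> \<sigma> m s :: real
  assumes \<sigma>: "0 < \<sigma>" and s: "0 < s"
  shows "0 \<le> gauss_KL \<mu> \<sigma> m s"
proof -
  have "ln ((\<sigma> / s)\<^sup>2) \<le> (\<sigma> / s)\<^sup>2 - 1"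
    using \<sigma> s by (intro ln_le_minus_one) simp
  moreover have "ln ((\<sigma> / s)\<^sup>2) = - 2 * ln (s / \<sigma>)"
    using \<sigma> s by (simp add: ln_realpow ln_div)
  ultimately have "(1 - (\<sigma> / s)\<^sup>2) / 2 \<le> ln (s / \<sigma>)"
    by simp
  moreover have "(1 - (\<sigma> / s)\<^sup>2) / 2 + \<sigma>\<^sup>2 / (2 * s\<^sup>2) - 1 / 2 = 0"
    using s by (simp add: field_simps power2_eq_square)
  moreover have "\<sigma>\<^sup>2 / (2 * s\<^sup>2) \<le> (\<sigma>\<^sup>2 + (\<mu> - m)\<^sup>2) / (2 * s\<^sup>2)"
    by (simp add: divide_right_mono)
  ultimately show ?thesis
    unfolding gauss_KL_def by linarith
qed

lemma gauss_KL_le: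
  fixes \<mu> \<sigma> m s :: real
  assumes \<sigma>: "0 < \<sigma>" and le: "\<sigma> \<le> s"
  shows "gauss_KL \<mu> \<sigma> m s \<le> (s\<^sup>2 - \<sigma>\<^sup>2 + (\<mu> - m)\<^sup>2) / (2 * \<sigma>\<^sup>2)"
proof -
  have s: "0 < s" using \<sigma> le by linarith
  have squares: "\<sigma>\<^sup>2 \<le> s\<^sup>2"
    using \<sigma> le by (intro power_mono) auto
  have "ln ((s / \<sigma>)\<^sup>2) \<le> (s / \<sigma>)\<^sup>2 - 1"
    using \<sigma> s by (intro ln_le_minus_one) simp
  then have "ln (s / \<sigma>) \<le> ((s / \<sigma>)\<^sup>2 - 1) / 2"
    using \<sigma> s by (simp add: ln_realpow)
  also have "\<dots> = (s\<^sup>2 - \<sigma>\<^sup>2) / (2 * \<sigma>\<^sup>2)"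
    using \<sigma> by (simp add: field_simps power2_eq_square)
  finally have "ln (s / \<sigma>) \<le> (s\<^sup>2 - \<sigma>\<^sup>2) / (2 * \<sigma>\<^sup>2)" .
  moreover have "\<sigma>\<^sup>2 / (2 * s\<^sup>2) \<le> 1 / 2"
    using squares s by (simp add: field_simps)
  moreover have "(\<mu> - m)\<^sup>2 / (2 * s\<^sup>2) \<le> (\<mu> - m)\<^sup>2 / (2 * \<sigma>\<^sup>2)"
    using squares \<sigma> s by (intro divide_left_mono) auto
  ultimately show ?thesis
    unfolding gauss_KL_def by (simp add: add_divide_distrib diff_divide_distrib)
qed

lemma gauss_log_ratio_variance_le:
  fixes \<sigma> s D :: real
  assumes \<sigma>: "0 < \<sigma>" and le: "\<sigma> \<le> s" and D: "0 \<le> D"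
  shows "D * \<sigma>\<^sup>2 / s^4 + 2 * (1 / (2 * \<sigma>\<^sup>2) - 1 / (2 * s\<^sup>2))\<^sup>2 * \<sigma>^4
      \<le> D / \<sigma>\<^sup>2 + (s\<^sup>2 - \<sigma>\<^sup>2)\<^sup>2 / (2 * \<sigma>^4)"
proof -
  have s: "0 < s" using \<sigma> le by linarith
  have fourth: "\<sigma>^4 \<le> s^4"
    using \<sigma> le by (intro power_mono) auto
  have "2 * (1 / (2 * \<sigma>\<^sup>2) - 1 / (2 * s\<^sup>2))\<^sup>2 * \<sigma>^4 = (s\<^sup>2 - \<sigma>\<^sup>2)\<^sup>2 / (2 * s^4)"
    using \<sigma> s by (simp add: field_simps power2_eq_square power4_eq_xxxx)
  also have "\<dots> \<le> (s\<^sup>2 - \<sigma>\<^sup>2)\<^sup>2 / (2 * \<sigma>^4)"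
    using fourth \<sigma> s by (intro divide_left_mono) auto
  finally have "2 * (1 / (2 * \<sigma>\<^sup>2) - 1 / (2 * s\<^sup>2))\<^sup>2 * \<sigma>^4 \<le> (s\<^sup>2 - \<sigma>\<^sup>2)\<^sup>2 / (2 * \<sigma>^4)" .
  moreover have "D * \<sigma>\<^sup>2 / s^4 \<le> D / \<sigma>\<^sup>2"
  proof -
    have "D * \<sigma>\<^sup>2 * \<sigma>\<^sup>2 \<le> D * s^4"
      using fourth D by (simp add: mult_left_mono power4_eq_xxxx power2_eq_square mult.assoc)
    then show ?thesis
      using \<sigma> s by (simp add: field_simps)
  qed
  ultimately show ?thesis by linarith
qed

lemma nn_integral_gauss_KL_linear:
  fixes \<mu> \<sigma> s a \<epsilon> :: real
  assumes \<epsilon>: "0 < \<epsilon>" and \<sigma>: "0 < \<sigma>" and s: "0 < s"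
  shows "(\<integral>\<^sup>+y. ennreal (gauss_KL \<mu> \<sigma> (a * y) s) \<partial>gauss \<mu> (\<epsilon>\<^sup>2))
    = ennreal (gauss_KL \<mu> \<sigma> (a * \<mu>) s + a\<^sup>2 * \<epsilon>\<^sup>2 / (2 * s\<^sup>2))"
proof -
  define K0 where "K0 = gauss_KL \<mu> \<sigma> (a * \<mu>) s"
  define c1 where "c1 = - (\<mu> - a * \<mu>) * a / s\<^sup>2"
  define c2 where "c2 = a\<^sup>2 / (2 * s\<^sup>2)"
  have quadratic: "gauss_KL \<mu> \<sigma> (a * y) s
      = K0 + c1 * (y - \<mu>) + c2 * (y - \<mu>)\<^sup>2 + 0 * (y - \<mu>)^3 + 0 * (y - \<mu>)^4" for y
  proof -
    have "\<mu> - a * y = (\<mu> - a * \<mu>) - a * (y - \<mu>)"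
      by (simp add: algebra_simps)
    then show ?thesis
      unfolding gauss_KL_def K0_def c1_def c2_def using s by (simp add: field_simps power2_eq_square)
  qed
  have "has_bochner_integral (gauss \<mu> (\<epsilon>\<^sup>2)) (\<lambda>y. gauss_KL \<mu> \<sigma> (a * y) s)
      (K0 + c2 * \<epsilon>\<^sup>2 + 3 * 0 * \<epsilon>^4)"
    unfolding quadratic by (rule has_bochner_integral_gauss_quartic[OF \<epsilon>])
  then have "integrable (gauss \<mu> (\<epsilon>\<^sup>2)) (\<lambda>y. gauss_KL \<mu> \<sigma> (a * y) s)"
    and "(\<integral>y. gauss_KL \<mu> \<sigma> (a * y) s \<partial>gauss \<mu> (\<epsilon>\<^sup>2)) = gauss_KL \<mu> \<sigma> (a * \<mu>) s + a\<^sup>2 * \<epsilon>\<^sup>2 / (2 * s\<^sup>2)"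
    by (auto simp: has_bochner_integral_iff K0_def c2_def)
  then show ?thesis
    using gauss_KL_nonneg[OF \<sigma> s] by (simp add: nn_integral_eq_integral)
qed

lemma KL_loss_PiM_gauss:
  fixes \<mu> m s :: "nat \<Rightarrow> real" and \<sigma> :: real
  assumes \<sigma>: "0 < \<sigma>" and s: "\<And>i. \<sigma> \<le> s i"
    and means: "summable (\<lambda>i. (\<mu> i - m i)\<^sup>2)" and variances: "summable (\<lambda>i. (s i)\<^sup>2 - \<sigma>\<^sup>2)"
  defines "P \<equiv> PiM UNIV (\<lambda>i. gauss (\<mu> i) (\<sigma>\<^sup>2))" and "Q \<equiv> PiM UNIV (\<lambda>i. gauss (m i) ((s i)\<^sup>2))"
  shows "absolutely_continuous P Q" and "absolutely_continuous Q P"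
    and "KL_loss P Q = (\<Sum>i. ennreal (gauss_KL (\<mu> i) \<sigma> (m i) (s i)))"
proof -
  define L where "L i = gauss_log_ratio (\<mu> i) \<sigma> (m i) (s i)" for i
  have s_pos: "0 < s i" for i
    using \<sigma> s[of i] by linarith
  have KL: "(\<integral>y. L i y \<partial>gauss (\<mu> i) (\<sigma>\<^sup>2)) = gauss_KL (\<mu> i) \<sigma> (m i) (s i)"
    and variance: "(\<integral>y. (L i y - gauss_KL (\<mu> i) \<sigma> (m i) (s i))\<^sup>2 \<partial>gauss (\<mu> i) (\<sigma>\<^sup>2))
      = (\<mu> i - m i)\<^sup>2 * \<sigma>\<^sup>2 / (s i)^4 + 2 * (1 / (2 * \<sigma>\<^sup>2) - 1 / (2 * (s i)\<^sup>2))\<^sup>2 * \<sigma>^4" for i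
    unfolding L_def[abs_def] using gauss_log_ratio_moments[OF \<sigma> s_pos] by simp_all
  have variances_square: "summable (\<lambda>i. ((s i)\<^sup>2 - \<sigma>\<^sup>2)\<^sup>2)"
    using variances \<sigma> s by (intro summable_square_if_nonneg) (auto intro: power_mono)
  interpret product_log_likelihood "\<lambda>i. gauss (\<mu> i) (\<sigma>\<^sup>2)" L
  proof (intro product_log_likelihood.intro product_prob_spaceI product_log_likelihood_axioms.intro)
    show "prob_space (gauss (\<mu> i) (\<sigma>\<^sup>2))" for i
      using \<sigma> by (intro prob_space_gauss) simp
    show "L i \<in> borel_measurable (gauss (\<mu> i) (\<sigma>\<^sup>2))" for i
      unfolding L_def[abs_def] gauss_log_ratio_def by measurable
    show "prob_space (density (gauss (\<mu> i) (\<sigma>\<^sup>2)) (\<lambda>y. ennreal (exp (- L i y))))" for i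
      unfolding L_def density_gauss_exp_log_ratio[OF \<sigma> s_pos] using s_pos[of i] by (intro prob_space_gauss) simp
    show "integrable (gauss (\<mu> i) (\<sigma>\<^sup>2)) (\<lambda>y. (L i y)\<^sup>2)" for i
      unfolding L_def using gauss_log_ratio_moments(1)[OF \<sigma> s_pos] .
    show "summable (\<lambda>i. \<integral>y. L i y \<partial>gauss (\<mu> i) (\<sigma>\<^sup>2))"
    proof (rule summable_comparison_test'[of "\<lambda>i. ((s i)\<^sup>2 - \<sigma>\<^sup>2 + (\<mu> i - m i)\<^sup>2) / (2 * \<sigma>\<^sup>2)"])
      show "summable (\<lambda>i. ((s i)\<^sup>2 - \<sigma>\<^sup>2 + (\<mu> i - m i)\<^sup>2) / (2 * \<sigma>\<^sup>2))"
        using variances means by (intro summable_divide summable_add)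
      show "norm (\<integral>y. L i y \<partial>gauss (\<mu> i) (\<sigma>\<^sup>2)) \<le> ((s i)\<^sup>2 - \<sigma>\<^sup>2 + (\<mu> i - m i)\<^sup>2) / (2 * \<sigma>\<^sup>2)" for i
        using gauss_KL_nonneg[OF \<sigma> s_pos] gauss_KL_le[OF \<sigma> s] by (simp add: KL)
    qed
    show "summable (\<lambda>i. \<integral>y. (L i y - (\<integral>z. L i z \<partial>gauss (\<mu> i) (\<sigma>\<^sup>2)))\<^sup>2 \<partial>gauss (\<mu> i) (\<sigma>\<^sup>2))"
    proof (rule summable_comparison_test'[of "\<lambda>i. (\<mu> i - m i)\<^sup>2 / \<sigma>\<^sup>2 + ((s i)\<^sup>2 - \<sigma>\<^sup>2)\<^sup>2 / (2 * \<sigma>^4)"])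
      show "summable (\<lambda>i. (\<mu> i - m i)\<^sup>2 / \<sigma>\<^sup>2 + ((s i)\<^sup>2 - \<sigma>\<^sup>2)\<^sup>2 / (2 * \<sigma>^4))"
        using means variances_square by (intro summable_divide summable_add)
      show "norm (\<integral>y. (L i y - (\<integral>z. L i z \<partial>gauss (\<mu> i) (\<sigma>\<^sup>2)))\<^sup>2 \<partial>gauss (\<mu> i) (\<sigma>\<^sup>2))
          \<le> (\<mu> i - m i)\<^sup>2 / \<sigma>\<^sup>2 + ((s i)\<^sup>2 - \<sigma>\<^sup>2)\<^sup>2 / (2 * \<sigma>^4)" for i
        using gauss_log_ratio_variance_le[OF \<sigma> s[of i], of "(\<mu> i - m i)\<^sup>2"] by (simp add: KL variance)
    qed
  qed
  have "N i = gauss (m i) ((s i)\<^sup>2)" for i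
    unfolding N_def L_def density_gauss_exp_log_ratio[OF \<sigma> s_pos] ..
  then have "PiM UNIV N = Q"
    unfolding Q_def by (intro PiM_cong) auto
  then show "absolutely_continuous P Q" and "absolutely_continuous Q P"
    and "KL_loss P Q = (\<Sum>i. ennreal (gauss_KL (\<mu> i) \<sigma> (m i) (s i)))"
    using KL_divergence_PiM summable_mean mean_nonneg
    by (simp_all add: P_def KL_loss_def KL suminf_ennreal2)
qed

section \<open>The Bayesian predictive distribution in the Gaussian sequence model\<close>

definition shrinkage :: "real \<Rightarrow> (nat \<Rightarrow> real) \<Rightarrow> nat \<Rightarrow> real" where
  "shrinkage \<epsilon> \<tau> i = (\<tau> i)\<^sup>2 / (\<epsilon>\<^sup>2 + (\<tau> i)\<^sup>2)"

lemma shrinkage_nonneg: "0 \<le> shrinkage \<epsilon> \<tau> i"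
  by (simp add: shrinkage_def)

lemma shrinkage_le_1: "shrinkage \<epsilon> \<tau> i \<le> 1"
  by (cases "\<tau> i = 0") (auto simp: shrinkage_def divide_le_eq_1 intro: add_nonneg_pos)

lemma summable_shrinkage:
  assumes "0 < \<epsilon>" "summable (\<lambda>i. (\<tau> i)\<^sup>2)"
  shows "summable (shrinkage \<epsilon> \<tau>)"
proof (rule summable_comparison_test'[of "\<lambda>i. (\<tau> i)\<^sup>2 / \<epsilon>\<^sup>2"])
  show "summable (\<lambda>i. (\<tau> i)\<^sup>2 / \<epsilon>\<^sup>2)"
    using assms(2) by (rule summable_divide)
  show "norm (shrinkage \<epsilon> \<tau> i) \<le> (\<tau> i)\<^sup>2 / \<epsilon>\<^sup>2" for i
    using assms(1) by (simp add: shrinkage_def frac_le add_pos_nonneg)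
qed

lemma bayes_pred_eq_PiM_gauss:
  assumes "0 < \<epsilon>"
  shows "bayes_pred \<epsilon> \<epsilon>' \<tau> x
    = PiM UNIV (\<lambda>i. gauss (shrinkage \<epsilon> \<tau> i * x i) (\<epsilon>'\<^sup>2 + shrinkage \<epsilon> \<tau> i * \<epsilon>\<^sup>2))"
  unfolding bayes_pred_def
proof (intro PiM_cong refl)
  fix i :: nat assume "i \<in> UNIV"
  have "(1 / \<epsilon>\<^sup>2) / (1 / \<epsilon>\<^sup>2 + 1 / (\<tau> i)\<^sup>2) = shrinkage \<epsilon> \<tau> i"
    and "1 / (1 / \<epsilon>\<^sup>2 + 1 / (\<tau> i)\<^sup>2) = shrinkage \<epsilon> \<tau> i * \<epsilon>\<^sup>2"
    if "\<tau> i \<noteq> 0"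
    using that assms by (simp_all add: shrinkage_def field_simps)
  then show "(if \<tau> i = 0 then gauss 0 (\<epsilon>'\<^sup>2)
      else gauss ((1 / \<epsilon>\<^sup>2) / (1 / \<epsilon>\<^sup>2 + 1 / (\<tau> i)\<^sup>2) * x i) (1 / (1 / \<epsilon>\<^sup>2 + 1 / (\<tau> i)\<^sup>2) + \<epsilon>'\<^sup>2))
    = gauss (shrinkage \<epsilon> \<tau> i * x i) (\<epsilon>'\<^sup>2 + shrinkage \<epsilon> \<tau> i * \<epsilon>\<^sup>2)"
    by (simp add: shrinkage_def add.commute)
qed

lemma KL_loss_bayes_pred:
  fixes \<epsilon> \<epsilon>' :: real and \<theta> \<tau> x :: "nat \<Rightarrow> real"
  assumes \<epsilon>: "0 < \<epsilon>" and \<epsilon>': "0 < \<epsilon>'" and \<tau>: "summable (\<lambda>i. (\<tau> i)\<^sup>2)"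
    and residual: "summable (\<lambda>i. (\<theta> i - shrinkage \<epsilon> \<tau> i * x i)\<^sup>2)"
  defines "s \<equiv> \<lambda>i. sqrt (\<epsilon>'\<^sup>2 + shrinkage \<epsilon> \<tau> i * \<epsilon>\<^sup>2)"
  shows "absolutely_continuous (gauss_prod \<theta> \<epsilon>') (bayes_pred \<epsilon> \<epsilon>' \<tau> x)"
    and "absolutely_continuous (bayes_pred \<epsilon> \<epsilon>' \<tau> x) (gauss_prod \<theta> \<epsilon>')"
    and "KL_loss (gauss_prod \<theta> \<epsilon>') (bayes_pred \<epsilon> \<epsilon>' \<tau> x)
      = (\<Sum>i. ennreal (gauss_KL (\<theta> i) \<epsilon>' (shrinkage \<epsilon> \<tau> i * x i) (s i)))"
proof -
  have s_square: "(s i)\<^sup>2 = \<epsilon>'\<^sup>2 + shrinkage \<epsilon> \<tau> i * \<epsilon>\<^sup>2" and s_ge: "\<epsilon>' \<le> s i" for i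
    using shrinkage_nonneg[of \<epsilon> \<tau> i] by (simp_all add: s_def real_le_rsqrt)
  have "summable (\<lambda>i. (s i)\<^sup>2 - \<epsilon>'\<^sup>2)"
    unfolding s_square using summable_shrinkage[OF \<epsilon> \<tau>] by (simp add: summable_mult2)
  note KL = KL_loss_PiM_gauss[OF \<epsilon>' s_ge residual this]
  have "bayes_pred \<epsilon> \<epsilon>' \<tau> x = PiM UNIV (\<lambda>i. gauss (shrinkage \<epsilon> \<tau> i * x i) ((s i)\<^sup>2))"
    unfolding bayes_pred_eq_PiM_gauss[OF \<epsilon>] s_square ..
  then show "absolutely_continuous (gauss_prod \<theta> \<epsilon>') (bayes_pred \<epsilon> \<epsilon>' \<tau> x)"
    and "absolutely_continuous (bayes_pred \<epsilon> \<epsilon>' \<tau> x) (gauss_prod \<theta> \<epsilon>')"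
    and "KL_loss (gauss_prod \<theta> \<epsilon>') (bayes_pred \<epsilon> \<epsilon>' \<tau> x)
      = (\<Sum>i. ennreal (gauss_KL (\<theta> i) \<epsilon>' (shrinkage \<epsilon> \<tau> i * x i) (s i)))"
    using KL by (simp_all add: gauss_prod_def)
qed

lemma shrunk_square_le:
  fixes a t :: real
  assumes "0 \<le> a" "a \<le> 1"
  shows "((1 - a) * t)\<^sup>2 \<le> t\<^sup>2"
  using assms mult_right_mono[of "(1 - a)\<^sup>2" 1 "t\<^sup>2"] by (simp add: power_mult_distrib power_le_one)

lemma square_residual_le:
  fixes a t y :: real
  assumes "0 \<le> a" "a \<le> 1"
  shows "(t - a * y)\<^sup>2 \<le> 2 * t\<^sup>2 + 2 * (a\<^sup>2 * (y - t)\<^sup>2)"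
proof -
  note shrunk_square_le[OF assms, of t]
  moreover have "(t - a * y)\<^sup>2 \<le> 2 * ((1 - a) * t)\<^sup>2 + 2 * (a * (y - t))\<^sup>2"
    using sum_squares_bound[of "(1 - a) * t" "- a * (y - t)"] by (simp add: power2_eq_square algebra_simps)
  ultimately show ?thesis
    by (simp add: power_mult_distrib)
qed

lemma AE_summable_residual:
  fixes \<epsilon> :: real and \<theta> \<tau> :: "nat \<Rightarrow> real"
  assumes \<epsilon>: "0 < \<epsilon>" and \<theta>: "summable (\<lambda>i. (\<theta> i)\<^sup>2)" and \<tau>: "summable (\<lambda>i. (\<tau> i)\<^sup>2)"
  shows "AE x in gauss_prod \<theta> \<epsilon>. summable (\<lambda>i. (\<theta> i - shrinkage \<epsilon> \<tau> i * x i)\<^sup>2)"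
proof -
  define a where "a = shrinkage \<epsilon> \<tau>"
  interpret product_prob_space "\<lambda>i. gauss (\<theta> i) (\<epsilon>\<^sup>2)" UNIV
    using \<epsilon> by (intro product_prob_spaceI prob_space_gauss) simp
  have moment: "has_bochner_integral (gauss (\<theta> i) (\<epsilon>\<^sup>2)) (\<lambda>y. (a i)\<^sup>2 * (y - \<theta> i)\<^sup>2) ((a i)\<^sup>2 * \<epsilon>\<^sup>2)" for i
    using has_bochner_integral_gauss_quartic[OF \<epsilon>, of "\<theta> i" 0 0 "(a i)\<^sup>2" 0 0] by simp
  have int: "integrable (gauss_prod \<theta> \<epsilon>) (\<lambda>x. (a i)\<^sup>2 * (x i - \<theta> i)\<^sup>2)"
    and integral_abs: "(\<integral>x. \<bar>(a i)\<^sup>2 * (x i - \<theta> i)\<^sup>2\<bar> \<partial>gauss_prod \<theta> \<epsilon>) = (a i)\<^sup>2 * \<epsilon>\<^sup>2" for i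
    using moment[of i] integrable_PiM_component_iff[of i "\<lambda>y. (a i)\<^sup>2 * (y - \<theta> i)\<^sup>2"]
      integral_PiM_component[of i "\<lambda>y. (a i)\<^sup>2 * (y - \<theta> i)\<^sup>2"]
    by (auto simp: gauss_prod_def has_bochner_integral_iff)
  have "summable (\<lambda>i. (a i)\<^sup>2 * \<epsilon>\<^sup>2)"
  proof (rule summable_comparison_test'[of "\<lambda>i. a i * \<epsilon>\<^sup>2"])
    show "summable (\<lambda>i. a i * \<epsilon>\<^sup>2)"
      unfolding a_def using summable_shrinkage[OF \<epsilon> \<tau>] by (rule summable_mult2)
    show "norm ((a i)\<^sup>2 * \<epsilon>\<^sup>2) \<le> a i * \<epsilon>\<^sup>2" for i
      using shrinkage_nonneg[of \<epsilon> \<tau> i] shrinkage_le_1[of \<epsilon> \<tau> i]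
      by (simp add: a_def power2_eq_square mult_left_le mult_right_mono)
  qed
  then have "AE x in gauss_prod \<theta> \<epsilon>. summable (\<lambda>i. \<bar>(a i)\<^sup>2 * (x i - \<theta> i)\<^sup>2\<bar>)"
    unfolding integral_abs[symmetric] by (rule AE_summable_abs_if_summable_integral[OF int])
  then show ?thesis
  proof eventually_elim
    case (elim x)
    show ?case
    proof (rule summable_comparison_test'[of "\<lambda>i. 2 * (\<theta> i)\<^sup>2 + 2 * ((a i)\<^sup>2 * (x i - \<theta> i)\<^sup>2)"])
      show "summable (\<lambda>i. 2 * (\<theta> i)\<^sup>2 + 2 * ((a i)\<^sup>2 * (x i - \<theta> i)\<^sup>2))"
        using \<theta> elim by (intro summable_add summable_mult) simp_all
      show "norm ((\<theta> i - shrinkage \<epsilon> \<tau> i * x i)\<^sup>2) \<le> 2 * (\<theta> i)\<^sup>2 + 2 * ((a i)\<^sup>2 * (x i - \<theta> i)\<^sup>2)" for i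
        using square_residual_le[OF shrinkage_nonneg shrinkage_le_1] by (simp add: a_def)
    qed
  qed
qed

lemma risk_summand_identities:
  fixes e f T t :: real
  assumes e: "0 < e" and f: "0 < f" and T: "0 \<le> T"
  defines "v \<equiv> 1 / (1 / e + 1 / f)" and "a \<equiv> T / (e + T)"
  shows "(1 + T / v) / (1 + T / e) = (f + a * e) / f"
    and "1/2 * (v + t) / (v + T) - 1/2 * (e + t) / (e + T)
      = (f + (1 - a)\<^sup>2 * t + a\<^sup>2 * e) / (2 * (f + a * e)) - 1/2"
proof -
  define W where "W = e * f + T * (e + f)"
  have W: "0 < W" using e f T unfolding W_def by (simp add: add_pos_nonneg)
  have eT: "0 < e + T" using e T by simp
  have "0 < e + f" using e f by simp
  have v: "v = e * f / (e + f)"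
    using e f by (simp add: v_def field_simps)
  have vT: "v + T = W / (e + f)" and vt: "v + t = (e * f + t * (e + f)) / (e + f)"
    using e f unfolding v W_def by (simp_all add: field_simps)
  have s: "f + a * e = W / (e + T)" and one_a: "1 - a = e / (e + T)"
    using eT unfolding a_def W_def by (simp_all add: field_simps)
  have r1: "1 + T / v = W / (e * f)"
    using e f unfolding v W_def by (simp add: field_simps)
  have r2: "1 + T / e = (e + T) / e"
    using e by (simp add: field_simps)
  show "(1 + T / v) / (1 + T / e) = (f + a * e) / f"
    unfolding r1 r2 s using e f eT by (simp add: field_simps)
  have "1/2 * (v + t) / (v + T) - 1/2 * (e + t) / (e + T)
      = ((e * f + t * (e + f)) * (e + T) - (e + t) * W) / (2 * W * (e + T))"
    using eT W \<open>0 < e + f\<close> unfolding vT vt by (simp add: divide_simps) algebra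
  also have "\<dots> = ((f * (e + T)\<^sup>2 + e\<^sup>2 * t + T\<^sup>2 * e) - W * (e + T)) / (2 * W * (e + T))"
    unfolding W_def by (simp add: algebra_simps power2_eq_square)
  also have "\<dots> = (f + (1 - a)\<^sup>2 * t + a\<^sup>2 * e) / (2 * (f + a * e)) - 1/2"
    using eT W unfolding s one_a unfolding a_def by (simp add: divide_simps) algebra
  finally show "1/2 * (v + t) / (v + T) - 1/2 * (e + t) / (e + T)
      = (f + (1 - a)\<^sup>2 * t + a\<^sup>2 * e) / (2 * (f + a * e)) - 1/2" .
qed

lemma bayes_risk_summand_le:
  fixes a t \<epsilon> \<epsilon>' :: real
  assumes \<epsilon>': "0 < \<epsilon>'" and a: "0 \<le> a" "a \<le> 1"
  defines "s \<equiv> sqrt (\<epsilon>'\<^sup>2 + a * \<epsilon>\<^sup>2)"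
  shows "gauss_KL t \<epsilon>' (a * t) s + a\<^sup>2 * \<epsilon>\<^sup>2 / (2 * s\<^sup>2) \<le> (2 * (a * \<epsilon>\<^sup>2) + t\<^sup>2) / (2 * \<epsilon>'\<^sup>2)"
proof -
  have s_ge: "\<epsilon>' \<le> s" and s_square: "s\<^sup>2 = \<epsilon>'\<^sup>2 + a * \<epsilon>\<^sup>2"
    using \<epsilon>' a by (simp_all add: s_def real_le_rsqrt)
  have "(t - a * t)\<^sup>2 \<le> t\<^sup>2"
    using shrunk_square_le[OF a, of t] by (simp add: algebra_simps)
  then have "gauss_KL t \<epsilon>' (a * t) s \<le> (a * \<epsilon>\<^sup>2 + t\<^sup>2) / (2 * \<epsilon>'\<^sup>2)"
    using gauss_KL_le[OF \<epsilon>' s_ge, of t "a * t"] \<epsilon>' by (simp add: s_square divide_right_mono order_trans)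
  moreover have "a\<^sup>2 * \<epsilon>\<^sup>2 / (2 * s\<^sup>2) \<le> a * \<epsilon>\<^sup>2 / (2 * \<epsilon>'\<^sup>2)"
    using a s_ge \<epsilon>' by (intro frac_le mult_right_mono) (auto simp: power2_eq_square mult_left_le mult_mono)
  ultimately show ?thesis
    by (simp add: add_divide_distrib)
qed

lemma risk_bayes_pred:
  fixes \<epsilon> \<epsilon>' :: real and \<theta> \<tau> :: "nat \<Rightarrow> real"
  assumes \<epsilon>: "0 < \<epsilon>" and \<epsilon>': "0 < \<epsilon>'" and \<theta>: "summable (\<lambda>i. (\<theta> i)\<^sup>2)" and \<tau>: "summable (\<lambda>i. (\<tau> i)\<^sup>2)"
  defines "a \<equiv> shrinkage \<epsilon> \<tau>"
  defines "s \<equiv> \<lambda>i. sqrt (\<epsilon>'\<^sup>2 + a i * \<epsilon>\<^sup>2)"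
  defines "R \<equiv> \<lambda>i. gauss_KL (\<theta> i) \<epsilon>' (a i * \<theta> i) (s i) + (a i)\<^sup>2 * \<epsilon>\<^sup>2 / (2 * (s i)\<^sup>2)"
  shows "AE x in gauss_prod \<theta> \<epsilon>.
      absolutely_continuous (bayes_pred \<epsilon> \<epsilon>' \<tau> x) (gauss_prod \<theta> \<epsilon>') \<and>
      absolutely_continuous (gauss_prod \<theta> \<epsilon>') (bayes_pred \<epsilon> \<epsilon>' \<tau> x)"
    and "summable R"
    and "risk (gauss_prod \<theta> \<epsilon>) (gauss_prod \<theta> \<epsilon>') (bayes_pred \<epsilon> \<epsilon>' \<tau>) = ennreal (\<Sum>i. R i)"
proof -
  have a: "0 \<le> a i" "a i \<le> 1" for i
    using shrinkage_nonneg shrinkage_le_1 by (simp_all add: a_def)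
  have s_pos: "0 < s i" and s_ge: "\<epsilon>' \<le> s i" and s_square: "(s i)\<^sup>2 = \<epsilon>'\<^sup>2 + a i * \<epsilon>\<^sup>2" for i
    using \<epsilon>' a(1)[of i] by (simp_all add: s_def add_pos_nonneg real_le_rsqrt)
  have R_nonneg: "0 \<le> R i" for i
    unfolding R_def using gauss_KL_nonneg[OF \<epsilon>' s_pos] by simp
  show "summable R"
  proof (rule summable_comparison_test'[of "\<lambda>i. (2 * (a i * \<epsilon>\<^sup>2) + (\<theta> i)\<^sup>2) / (2 * \<epsilon>'\<^sup>2)"])
    show "summable (\<lambda>i. (2 * (a i * \<epsilon>\<^sup>2) + (\<theta> i)\<^sup>2) / (2 * \<epsilon>'\<^sup>2))"
      using summable_shrinkage[OF \<epsilon> \<tau>] \<theta> unfolding a_def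
      by (intro summable_divide summable_add summable_mult summable_mult2)
    show "norm (R i) \<le> (2 * (a i * \<epsilon>\<^sup>2) + (\<theta> i)\<^sup>2) / (2 * \<epsilon>'\<^sup>2)" for i
      using R_nonneg[of i] bayes_risk_summand_le[OF \<epsilon>' a] by (simp add: R_def s_def)
  qed
  note residual = AE_summable_residual[OF \<epsilon> \<theta> \<tau>]
  show "AE x in gauss_prod \<theta> \<epsilon>.
      absolutely_continuous (bayes_pred \<epsilon> \<epsilon>' \<tau> x) (gauss_prod \<theta> \<epsilon>') \<and>
      absolutely_continuous (gauss_prod \<theta> \<epsilon>') (bayes_pred \<epsilon> \<epsilon>' \<tau> x)"
    using residual by eventually_elim (simp add: KL_loss_bayes_pred[OF \<epsilon> \<epsilon>' \<tau>])
  interpret product_prob_space "\<lambda>i. gauss (\<theta> i) (\<epsilon>\<^sup>2)" UNIV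
    using \<epsilon> by (intro product_prob_spaceI prob_space_gauss) simp
  have "risk (gauss_prod \<theta> \<epsilon>) (gauss_prod \<theta> \<epsilon>') (bayes_pred \<epsilon> \<epsilon>' \<tau>)
      = (\<integral>\<^sup>+x. (\<Sum>i. ennreal (gauss_KL (\<theta> i) \<epsilon>' (a i * x i) (s i))) \<partial>gauss_prod \<theta> \<epsilon>)"
    unfolding risk_def using residual
    by (intro nn_integral_cong_AE) (auto elim!: eventually_mono simp: KL_loss_bayes_pred[OF \<epsilon> \<epsilon>' \<tau>] a_def s_def)
  also have "\<dots> = (\<Sum>i. \<integral>\<^sup>+x. ennreal (gauss_KL (\<theta> i) \<epsilon>' (a i * x i) (s i)) \<partial>gauss_prod \<theta> \<epsilon>)"
    unfolding gauss_prod_def gauss_KL_def by (intro nn_integral_suminf) measurable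
  also have "\<dots> = (\<Sum>i. ennreal (R i))"
  proof (intro suminf_cong)
    fix i
    have "(\<integral>\<^sup>+x. ennreal (gauss_KL (\<theta> i) \<epsilon>' (a i * x i) (s i)) \<partial>gauss_prod \<theta> \<epsilon>)
        = (\<integral>\<^sup>+y. ennreal (gauss_KL (\<theta> i) \<epsilon>' (a i * y) (s i)) \<partial>gauss (\<theta> i) (\<epsilon>\<^sup>2))"
      unfolding gauss_prod_def gauss_KL_def by (intro nn_integral_PiM_component) auto
    also have "\<dots> = ennreal (R i)"
      unfolding R_def by (rule nn_integral_gauss_KL_linear[OF \<epsilon> \<epsilon>' s_pos])
    finally show "(\<integral>\<^sup>+x. ennreal (gauss_KL (\<theta> i) \<epsilon>' (a i * x i) (s i)) \<partial>gauss_prod \<theta> \<epsilon>) = ennreal (R i)" .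
  qed
  also have "\<dots> = ennreal (\<Sum>i. R i)"
    using R_nonneg \<open>summable R\<close> by (rule suminf_ennreal2)
  finally show "risk (gauss_prod \<theta> \<epsilon>) (gauss_prod \<theta> \<epsilon>') (bayes_pred \<epsilon> \<epsilon>' \<tau>) = ennreal (\<Sum>i. R i)" .
qed

lemma risk_summand_eq_gauss_KL:
  fixes \<epsilon> \<epsilon>' T t :: real
  assumes \<epsilon>: "0 < \<epsilon>" and \<epsilon>': "0 < \<epsilon>'" and T: "0 \<le> T"
  defines "v \<equiv> 1 / (1 / \<epsilon>\<^sup>2 + 1 / \<epsilon>'\<^sup>2)" and "a \<equiv> T / (\<epsilon>\<^sup>2 + T)"
  defines "s \<equiv> sqrt (\<epsilon>'\<^sup>2 + a * \<epsilon>\<^sup>2)"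
  shows "1/2 * ln ((1 + T / v) / (1 + T / \<epsilon>\<^sup>2)) + 1/2 * (v + t\<^sup>2) / (v + T) - 1/2 * (\<epsilon>\<^sup>2 + t\<^sup>2) / (\<epsilon>\<^sup>2 + T)
    = gauss_KL t \<epsilon>' (a * t) s + a\<^sup>2 * \<epsilon>\<^sup>2 / (2 * s\<^sup>2)"
proof -
  have ratio: "(1 + T / v) / (1 + T / \<epsilon>\<^sup>2) = (\<epsilon>'\<^sup>2 + a * \<epsilon>\<^sup>2) / \<epsilon>'\<^sup>2"
    using risk_summand_identities(1)[of "\<epsilon>\<^sup>2" "\<epsilon>'\<^sup>2" T] \<epsilon> \<epsilon>' T by (simp add: v_def a_def)
  have rational: "1/2 * (v + t\<^sup>2) / (v + T) - 1/2 * (\<epsilon>\<^sup>2 + t\<^sup>2) / (\<epsilon>\<^sup>2 + T)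
      = (\<epsilon>'\<^sup>2 + (1 - a)\<^sup>2 * t\<^sup>2 + a\<^sup>2 * \<epsilon>\<^sup>2) / (2 * (\<epsilon>'\<^sup>2 + a * \<epsilon>\<^sup>2)) - 1/2"
    using risk_summand_identities(2)[of "\<epsilon>\<^sup>2" "\<epsilon>'\<^sup>2" T "t\<^sup>2"] \<epsilon> \<epsilon>' T by (simp add: v_def a_def)
  have "0 \<le> a"
    using \<epsilon> T by (simp add: a_def)
  then have s: "0 < s" and s_square: "s\<^sup>2 = \<epsilon>'\<^sup>2 + a * \<epsilon>\<^sup>2"
    using \<epsilon>' by (simp_all add: s_def add_pos_nonneg)
  have "1/2 * ln ((1 + T / v) / (1 + T / \<epsilon>\<^sup>2)) = 1/2 * ln ((s / \<epsilon>')\<^sup>2)"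
    using \<epsilon>' by (simp add: ratio s_square power_divide)
  also have "\<dots> = ln (s / \<epsilon>')"
    using s \<epsilon>' by (simp add: ln_realpow)
  finally have "1/2 * ln ((1 + T / v) / (1 + T / \<epsilon>\<^sup>2)) = ln (s / \<epsilon>')" .
  moreover have "(\<epsilon>'\<^sup>2 + (1 - a)\<^sup>2 * t\<^sup>2 + a\<^sup>2 * \<epsilon>\<^sup>2) / (2 * (\<epsilon>'\<^sup>2 + a * \<epsilon>\<^sup>2))
      = (\<epsilon>'\<^sup>2 + (t - a * t)\<^sup>2) / (2 * s\<^sup>2) + a\<^sup>2 * \<epsilon>\<^sup>2 / (2 * s\<^sup>2)"
  proof -
    have "(1 - a)\<^sup>2 * t\<^sup>2 = (t - a * t)\<^sup>2"
      by (simp add: power2_eq_square algebra_simps)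
    then show ?thesis
      unfolding s_square[symmetric] by (simp add: add_divide_distrib)
  qed
  ultimately show ?thesis
    using rational by (simp add: gauss_KL_def)
qed

theorem lemma3p1:
  fixes \<epsilon> \<epsilon>' :: real and \<theta> \<tau> :: "nat \<Rightarrow> real"
  assumes "\<epsilon> > 0" and "\<epsilon>' > 0"
    and "in_l2 \<theta>" and "in_l2 \<tau>" and "\<And>i. \<tau> i \<ge> 0"
  defines "v1 \<equiv> 1 / (1 / \<epsilon>\<^sup>2 + 1 / \<epsilon>'\<^sup>2)" and "v0 \<equiv> \<epsilon>\<^sup>2"
  shows "(AE x in gauss_prod \<theta> \<epsilon>.
            absolutely_continuous (bayes_pred \<epsilon> \<epsilon>' \<tau> x) (gauss_prod \<theta> \<epsilon>') \<and>
            absolutely_continuous (gauss_prod \<theta> \<epsilon>') (bayes_pred \<epsilon> \<epsilon>' \<tau> x))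
       \<and> summable (\<lambda>i. 1/2 * ln ((1 + (\<tau> i)\<^sup>2 / v1) / (1 + (\<tau> i)\<^sup>2 / v0))
                    + 1/2 * (v1 + (\<theta> i)\<^sup>2) / (v1 + (\<tau> i)\<^sup>2)
                    - 1/2 * (v0 + (\<theta> i)\<^sup>2) / (v0 + (\<tau> i)\<^sup>2))
       \<and> risk (gauss_prod \<theta> \<epsilon>) (gauss_prod \<theta> \<epsilon>') (bayes_pred \<epsilon> \<epsilon>' \<tau>)
           = ennreal (\<Sum>i. 1/2 * ln ((1 + (\<tau> i)\<^sup>2 / v1) / (1 + (\<tau> i)\<^sup>2 / v0))
                    + 1/2 * (v1 + (\<theta> i)\<^sup>2) / (v1 + (\<tau> i)\<^sup>2)
                    - 1/2 * (v0 + (\<theta> i)\<^sup>2) / (v0 + (\<tau> i)\<^sup>2))"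
proof -
  have \<epsilon>: "0 < \<epsilon>" and \<epsilon>': "0 < \<epsilon>'"
    using assms(1,2) .
  have \<theta>: "summable (\<lambda>i. (\<theta> i)\<^sup>2)" and \<tau>: "summable (\<lambda>i. (\<tau> i)\<^sup>2)"
    using assms(3,4) by (simp_all add: in_l2_def)
  have "(\<lambda>i. 1/2 * ln ((1 + (\<tau> i)\<^sup>2 / v1) / (1 + (\<tau> i)\<^sup>2 / v0))
                    + 1/2 * (v1 + (\<theta> i)\<^sup>2) / (v1 + (\<tau> i)\<^sup>2)
                    - 1/2 * (v0 + (\<theta> i)\<^sup>2) / (v0 + (\<tau> i)\<^sup>2))
      = (\<lambda>i. gauss_KL (\<theta> i) \<epsilon>' (shrinkage \<epsilon> \<tau> i * \<theta> i) (sqrt (\<epsilon>'\<^sup>2 + shrinkage \<epsilon> \<tau> i * \<epsilon>\<^sup>2))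
          + (shrinkage \<epsilon> \<tau> i)\<^sup>2 * \<epsilon>\<^sup>2 / (2 * (sqrt (\<epsilon>'\<^sup>2 + shrinkage \<epsilon> \<tau> i * \<epsilon>\<^sup>2))\<^sup>2))"
    unfolding v1_def v0_def shrinkage_def using risk_summand_eq_gauss_KL[OF \<epsilon> \<epsilon>'] by simp
  then show ?thesis
    using risk_bayes_pred[OF \<epsilon> \<epsilon>' \<theta> \<tau>] by simp
qed

end
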